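(* Let $\mathfrak{g}$ be a finite-dimensional complex two-step nilpotent Lie algebra with $\dim([\mathfrak{g},\mathfrak{g}])\le 2$. Then $\mathfrak{g}$ admits a periodic derivation.
   Context: A derivation $D$ of a Lie algebra is called periodic if there is an integer $m\ge 1$ with $D^m=\mathrm{id}$. *)

theory Defs
  imports Complex_Main
begin

definition lie_algebra :: "(complex \<Rightarrow> 'a::ab_group_add \<Rightarrow> 'a) \<Rightarrow> ('a \<Rightarrow> 'a \<Rightarrow> 'a) \<Rightarrow> bool" where
  "lie_algebra sc br \<longleftrightarrow>
     vector_space sc \<and>
     (\<forall>x. Vector_Spaces.linear sc sc (br x)) \<and>
     (\<forall>y. Vector_Spaces.linear sc sc (\<lambda>x. br x y)) \<and>
     (\<forall>x. br x x = 0) \<and>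
     (\<forall>x y z. br x (br y z) + br y (br z x) + br z (br x y) = 0)"

definition finite_dim_space :: "(complex \<Rightarrow> 'a::ab_group_add \<Rightarrow> 'a) \<Rightarrow> bool" where
  "finite_dim_space sc \<longleftrightarrow> (\<exists>B. finite B \<and> module.span sc B = UNIV)"

definition derived_algebra :: "(complex \<Rightarrow> 'a::ab_group_add \<Rightarrow> 'a) \<Rightarrow> ('a \<Rightarrow> 'a \<Rightarrow> 'a) \<Rightarrow> 'a set" where
  "derived_algebra sc br = module.span sc {br x y | x y. True}"

definition two_step_nilpotent :: "('a::ab_group_add \<Rightarrow> 'a \<Rightarrow> 'a) \<Rightarrow> bool" where
  "two_step_nilpotent br \<longleftrightarrow>
     (\<forall>x y z. br x (br y z) = 0) \<and> (\<exists>x y. br x y \<noteq> 0)"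

definition lie_derivation :: "(complex \<Rightarrow> 'a::ab_group_add \<Rightarrow> 'a) \<Rightarrow> ('a \<Rightarrow> 'a \<Rightarrow> 'a) \<Rightarrow> ('a \<Rightarrow> 'a) \<Rightarrow> bool" where
  "lie_derivation sc br D \<longleftrightarrow>
     Vector_Spaces.linear sc sc D \<and> (\<forall>x y. D (br x y) = br (D x) y + br x (D y))"

definition periodic_derivation :: "(complex \<Rightarrow> 'a::ab_group_add \<Rightarrow> 'a) \<Rightarrow> ('a \<Rightarrow> 'a \<Rightarrow> 'a) \<Rightarrow> ('a \<Rightarrow> 'a) \<Rightarrow> bool" where
  "periodic_derivation sc br D \<longleftrightarrow>
     lie_derivation sc br D \<and> (\<exists>m::nat. m \<ge> 1 \<and> D ^^ m = id)"

end

theory Submission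
  imports Defs
begin

text \<open>
  Choose a complement \<open>V\<close> of the derived algebra \<open>\<nn> = [\<gg>, \<gg>]\<close> and a basis of \<open>\<nn>\<close>; the coordinates
  of the bracket are two skew forms \<open>\<omega>1, \<omega>2\<close> on \<open>V\<close>. Over \<open>\<complex>\<close> every pair of skew forms
  admits a decomposition \<open>V = U \<oplus> U'\<close> into two subspaces that are isotropic for both forms (this is
  the content of the Kronecker normal form of the pencil spanned by \<open>\<omega>1\<close> and \<open>\<omega>2\<close>). It is proved by
  induction on \<open>dim V\<close>, after replacing \<open>\<omega>1\<close> by a member of the pencil whose radical has least
  dimension: a vector in the radical of both forms, or a vector in the radical of \<open>\<omega>1\<close> on which
  \<open>\<omega>2\<close> does not vanish, can be split off; and if \<open>\<omega>1\<close> is nondegenerate, then \<open>\<omega>2 = \<omega>1 (S _) _\<close>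
  for an \<open>\<omega>1\<close>-self-adjoint \<open>S\<close>, and a Krylov subspace of \<open>S\<close> of maximal length together with an
  \<open>\<omega>1\<close>-dual Krylov subspace splits off an \<open>S\<close>-invariant nondegenerate block.

  Given the splitting, the bracket only pairs \<open>U\<close> with \<open>U'\<close>. For the primitive sixth root of unity
  \<open>\<zeta>\<close>, the linear map acting by \<open>\<zeta>\<close> on \<open>U\<close>, by \<open>cnj \<zeta>\<close> on \<open>U'\<close> and as the identity on \<open>\<nn>\<close> is
  a derivation because \<open>\<zeta> + cnj \<zeta> = 1\<close>, and its sixth power is the identity.
\<close>

section \<open>Skew forms on a finite-dimensional complex space\<close>

definition isotropic :: "('a \<Rightarrow> 'a \<Rightarrow> complex) \<Rightarrow> 'a set \<Rightarrow> bool" where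
  "isotropic \<omega> U \<longleftrightarrow> (\<forall>x\<in>U. \<forall>y\<in>U. \<omega> x y = 0)"

definition radical :: "'a set \<Rightarrow> ('a \<Rightarrow> 'a \<Rightarrow> complex) \<Rightarrow> 'a set" where
  "radical W \<omega> = {x\<in>W. \<forall>y\<in>W. \<omega> x y = 0}"

definition orthogonal_complement :: "'a set \<Rightarrow> ('a \<Rightarrow> 'a \<Rightarrow> complex) \<Rightarrow> 'a set \<Rightarrow> 'a set" where
  "orthogonal_complement W \<omega> X = {y\<in>W. \<forall>x\<in>X. \<omega> x y = 0}"

definition pencil :: "complex \<Rightarrow> complex \<Rightarrow> ('a \<Rightarrow> 'a \<Rightarrow> complex) \<Rightarrow> ('a \<Rightarrow> 'a \<Rightarrow> complex) \<Rightarrow> 'a \<Rightarrow> 'a \<Rightarrow> complex" where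
  "pencil a b \<omega>1 \<omega>2 = (\<lambda>x y. a * \<omega>1 x y + b * \<omega>2 x y)"

definition (in module) independent_family :: "('i \<Rightarrow> 'b) \<Rightarrow> 'i set \<Rightarrow> bool" where
  "independent_family v T \<longleftrightarrow> (\<forall>c. (\<Sum>t\<in>T. c t *s v t) = 0 \<longrightarrow> (\<forall>t\<in>T. c t = 0))"

lemma antitriangular_system_trivial:
  fixes M :: "nat \<Rightarrow> nat \<Rightarrow> complex" and c :: "nat \<Rightarrow> complex"
  assumes low: "\<And>i j. i + j < d - 1 \<Longrightarrow> M i j = 0"
    and diag: "\<And>i. i < d \<Longrightarrow> M i (d - 1 - i) \<noteq> 0"
    and eqs: "\<And>i. i < d \<Longrightarrow> (\<Sum>j<d. c j * M i j) = 0"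
  shows "\<forall>j<d. c j = 0"
proof -
  have "c (d - 1 - k) = 0" if "k < d" for k
    using that
  proof (induction k rule: less_induct)
    case (less k)
    have "(\<Sum>j\<in>{..<d} - {d - 1 - k}. c j * M k j) = 0"
    proof (rule sum.neutral, intro ballI)
      fix j assume j: "j \<in> {..<d} - {d - 1 - k}"
      show "c j * M k j = 0"
      proof (cases "j < d - 1 - k")
        case True
        then show ?thesis using low[of k j] by simp
      next
        case False
        then have "d - 1 - j < k" "d - 1 - (d - 1 - j) = j" using j by auto
        then show ?thesis using less.IH[of "d - 1 - j"] less.prems by simp
      qed
    qed
    moreover have "(\<Sum>j<d. c j * M k j)
        = c (d - 1 - k) * M k (d - 1 - k) + (\<Sum>j\<in>{..<d} - {d - 1 - k}. c j * M k j)"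
      by (rule sum.remove) (use less.prems in auto)
    ultimately show ?case using eqs[OF less.prems] diag[OF less.prems] by simp
  qed
  moreover have "d - 1 - j < d" "d - 1 - (d - 1 - j) = j" if "j < d" for j
    using that by auto
  ultimately show ?thesis by metis
qed

locale complex_fd_space = finite_dimensional_vector_space scale Basis
  for scale :: "complex \<Rightarrow> 'a::ab_group_add \<Rightarrow> 'a" (infixr \<open>*s\<close> 75) and Basis
begin

definition skew_form :: "('a \<Rightarrow> 'a \<Rightarrow> complex) \<Rightarrow> bool" where
  "skew_form \<omega> \<longleftrightarrow> (\<forall>x y z. \<omega> (x + y) z = \<omega> x z + \<omega> y z) \<and> (\<forall>c x y. \<omega> (c *s x) y = c * \<omega> x y)
     \<and> (\<forall>x y. \<omega> y x = - \<omega> x y)"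

definition linear_form :: "('a \<Rightarrow> complex) \<Rightarrow> bool" where
  "linear_form f \<longleftrightarrow> (\<forall>x y. f (x + y) = f x + f y) \<and> (\<forall>c x. f (c *s x) = c * f x)"

definition direct_sum :: "'a set \<Rightarrow> 'a set \<Rightarrow> 'a set \<Rightarrow> bool" where
  "direct_sum W U U' \<longleftrightarrow> subspace U \<and> subspace U' \<and> U \<subseteq> W \<and> U' \<subseteq> W \<and> U \<inter> U' = {0}
     \<and> (\<forall>w\<in>W. \<exists>u\<in>U. \<exists>u'\<in>U'. w = u + u')"

definition isotropic_splitting ::
    "'a set \<Rightarrow> 'a set \<Rightarrow> 'a set \<Rightarrow> ('a \<Rightarrow> 'a \<Rightarrow> complex) \<Rightarrow> ('a \<Rightarrow> 'a \<Rightarrow> complex) \<Rightarrow> bool" where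
  "isotropic_splitting W U U' \<omega>1 \<omega>2 \<longleftrightarrow> direct_sum W U U'
     \<and> isotropic \<omega>1 U \<and> isotropic \<omega>2 U \<and> isotropic \<omega>1 U' \<and> isotropic \<omega>2 U'"

definition minimal_radical :: "'a set \<Rightarrow> ('a \<Rightarrow> 'a \<Rightarrow> complex) \<Rightarrow> ('a \<Rightarrow> 'a \<Rightarrow> complex) \<Rightarrow> bool" where
  "minimal_radical W \<omega>1 \<omega>2 \<longleftrightarrow> (\<forall>a b. dim (radical W \<omega>1) \<le> dim (radical W (pencil a b \<omega>1 \<omega>2)))"

context
  fixes \<omega> assumes skew: "skew_form \<omega>"
begin

lemma skew_add_left: "\<omega> (x + y) z = \<omega> x z + \<omega> y z"
  using skew unfolding skew_form_def by blast

lemma skew_scale_left: "\<omega> (c *s x) y = c * \<omega> x y"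
  using skew unfolding skew_form_def by blast

lemma skew_swap: "\<omega> y x = - \<omega> x y"
  using skew unfolding skew_form_def by blast

lemma skew_add_right: "\<omega> z (x + y) = \<omega> z x + \<omega> z y"
  using skew_add_left[of x y z] skew_swap[of z x] skew_swap[of z y] skew_swap[of z "x + y"] by simp

lemma skew_scale_right: "\<omega> y (c *s x) = c * \<omega> y x"
  using skew_scale_left[of c x y] skew_swap[of y x] skew_swap[of y "c *s x"] by simp

lemma skew_zero_left [simp]: "\<omega> 0 y = 0"
  using skew_scale_left[of 0 0 y] by simp

lemma skew_zero_right [simp]: "\<omega> y 0 = 0"
  using skew_scale_right[of y 0 0] by simp

lemma skew_self [simp]: "\<omega> x x = 0"
  using skew_swap[of x x] by simp

lemma skew_diff_left: "\<omega> (x - y) z = \<omega> x z - \<omega> y z"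
  using skew_add_left[of "x - y" y z] by (simp add: eq_diff_eq)

lemma skew_diff_right: "\<omega> z (x - y) = \<omega> z x - \<omega> z y"
  using skew_add_right[of z "x - y" y] by (simp add: eq_diff_eq)

lemma skew_sum_left: "\<omega> (\<Sum>i\<in>A. f i) y = (\<Sum>i\<in>A. \<omega> (f i) y)"
  by (induction A rule: infinite_finite_induct) (auto simp: skew_add_left)

lemma skew_sum_right: "\<omega> y (\<Sum>i\<in>A. f i) = (\<Sum>i\<in>A. \<omega> y (f i))"
  by (induction A rule: infinite_finite_induct) (auto simp: skew_add_right)

lemma linear_form_skew_right: "linear_form (\<omega> x)"
  unfolding linear_form_def by (simp add: skew_add_right skew_scale_right)

lemma linear_form_skew_left: "linear_form (\<lambda>y. \<omega> y x)"
  unfolding linear_form_def by (simp add: skew_add_left skew_scale_left)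

lemma subspace_radical: "subspace W \<Longrightarrow> subspace (radical W \<omega>)"
  unfolding subspace_def radical_def by (auto simp: skew_add_left skew_scale_left)

lemma subspace_orthogonal_complement: "subspace W \<Longrightarrow> subspace (orthogonal_complement W \<omega> X)"
  unfolding subspace_def orthogonal_complement_def by (auto simp: skew_add_right skew_scale_right)

lemma radical_iff_orthogonal: "x \<in> radical W \<omega> \<longleftrightarrow> x \<in> W \<and> (\<forall>y\<in>W. \<omega> y x = 0)"
  unfolding radical_def using skew_swap[of _ x] by auto

lemma isotropic_span:
  assumes "isotropic \<omega> G"
  shows "isotropic \<omega> (span G)"
proof -
  have generator: "\<forall>y\<in>span G. \<omega> x y = 0" if "x \<in> G" for x
  proof
    fix y assume "y \<in> span G"
    then show "\<omega> x y = 0"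
      by (induction rule: span_induct)
        (use assms that in \<open>auto simp: isotropic_def subspace_def skew_add_right skew_scale_right\<close>)
  qed
  have "\<forall>y\<in>span G. \<omega> x y = 0" if "x \<in> span G" for x
    using that
  proof (induction rule: span_induct)
    case base
    then show ?case by (auto simp: subspace_def skew_add_left skew_scale_left)
  next
    case (step x)
    then show ?case using generator by blast
  qed
  then show ?thesis unfolding isotropic_def by blast
qed

lemma isotropic_sums:
  assumes "isotropic \<omega> A" "isotropic \<omega> B" and orth: "\<forall>a\<in>A. \<forall>b\<in>B. \<omega> a b = 0"
  shows "isotropic \<omega> {a + b |a b. a \<in> A \<and> b \<in> B}"
  unfolding isotropic_def
proof (intro ballI)
  fix x y assume "x \<in> {a + b |a b. a \<in> A \<and> b \<in> B}" "y \<in> {a + b |a b. a \<in> A \<and> b \<in> B}"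
  then obtain a1 b1 a2 b2 where ab: "x = a1 + b1" "y = a2 + b2" "a1 \<in> A" "b1 \<in> B" "a2 \<in> A" "b2 \<in> B"
    by blast
  have "\<omega> b1 a2 = - \<omega> a2 b1" by (rule skew_swap)
  then have "\<omega> b1 a2 = 0" using orth ab by simp
  moreover have "\<omega> a1 a2 = 0" "\<omega> a1 b2 = 0" "\<omega> b1 b2 = 0"
    using assms ab unfolding isotropic_def by auto
  ultimately show "\<omega> x y = 0" using ab(1,2) by (simp add: skew_add_left skew_add_right)
qed

end

lemma skew_form_pencil:
  assumes s1: "skew_form \<omega>1" and s2: "skew_form \<omega>2"
  shows "skew_form (pencil a b \<omega>1 \<omega>2)"
  unfolding skew_form_def pencil_def
proof (intro conjI allI)
  fix x y z c
  show "a * \<omega>1 (x + y) z + b * \<omega>2 (x + y) z = a * \<omega>1 x z + b * \<omega>2 x z + (a * \<omega>1 y z + b * \<omega>2 y z)"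
    by (simp add: skew_add_left[OF s1] skew_add_left[OF s2] algebra_simps)
  show "a * \<omega>1 (c *s x) y + b * \<omega>2 (c *s x) y = c * (a * \<omega>1 x y + b * \<omega>2 x y)"
    by (simp add: skew_scale_left[OF s1] skew_scale_left[OF s2] algebra_simps)
  show "a * \<omega>1 y x + b * \<omega>2 y x = - (a * \<omega>1 x y + b * \<omega>2 x y)"
    using skew_swap[OF s1, of y x] skew_swap[OF s2, of y x] by (simp add: algebra_simps)
qed

lemma radical_subset: "radical W \<omega> \<subseteq> W"
  unfolding radical_def by auto

lemma orthogonal_complement_subset: "orthogonal_complement W \<omega> X \<subseteq> W"
  unfolding orthogonal_complement_def by auto

lemma linear_form_diff:
  assumes "linear_form f"
  shows "f (x - y) = f x - f y"
  using assms unfolding linear_form_def by (metis add_diff_cancel diff_add_cancel)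

lemma orthogonal_span_insert:
  assumes s: "skew_form \<omega>" and "x \<in> span (insert b Bs)" "\<forall>s\<in>span Bs. \<omega> s w = 0" "\<omega> b w = 0"
  shows "\<omega> x w = 0"
proof -
  obtain k where k: "x - k *s b \<in> span Bs" using assms(2) span_breakdown_eq by blast
  have "\<omega> x w = \<omega> (x - k *s b) w + k * \<omega> b w"
    by (simp add: skew_diff_left[OF s] skew_scale_left[OF s])
  then show ?thesis using assms(3,4) k by simp
qed

lemma linear_form_proportional:
  assumes s: "skew_form \<omega>" and T: "subspace T" and f: "linear_form f"
    and h: "\<forall>w\<in>T. (\<forall>s\<in>span (insert b Bs). \<omega> s w = 0) \<longrightarrow> f w = 0"
    and z: "z \<in> T" "\<forall>s\<in>span Bs. \<omega> s z = 0" "\<omega> b z \<noteq> 0"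
    and w: "w \<in> T" "\<forall>s\<in>span Bs. \<omega> s w = 0"
  shows "f w = (f z / \<omega> b z) * \<omega> b w"
proof -
  define w' where "w' = w - (\<omega> b w / \<omega> b z) *s z"
  have "w' \<in> T" unfolding w'_def using T w z by (simp add: subspace_diff subspace_scale)
  moreover have "\<forall>s\<in>span Bs. \<omega> s w' = 0" "\<omega> b w' = 0"
    using w z unfolding w'_def by (simp_all add: skew_diff_right[OF s] skew_scale_right[OF s])
  ultimately have "f w' = 0" using h orthogonal_span_insert[OF s] by blast
  moreover have "f w' = f w - (\<omega> b w / \<omega> b z) * f z"
    using linear_form_diff[OF f] f unfolding w'_def linear_form_def by simp
  ultimately show ?thesis by simp
qed

lemma linear_form_represented_span:
  assumes s: "skew_form \<omega>" and T: "subspace T" and fin: "finite Bs"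
  shows "linear_form f \<Longrightarrow> \<forall>w\<in>T. (\<forall>s\<in>span Bs. \<omega> s w = 0) \<longrightarrow> f w = 0
    \<Longrightarrow> \<exists>s\<in>span Bs. \<forall>w\<in>T. f w = \<omega> s w"
  using fin
proof (induction Bs arbitrary: f rule: finite_induct)
  case empty
  then show ?case using skew_zero_left[OF s] by auto
next
  case (insert b Bs)
  show ?case
  proof (cases "\<exists>z\<in>T. (\<forall>s\<in>span Bs. \<omega> s z = 0) \<and> \<omega> b z \<noteq> 0")
    case True
    then obtain z where z: "z \<in> T" "\<forall>s\<in>span Bs. \<omega> s z = 0" "\<omega> b z \<noteq> 0" by blast
    define c where "c = f z / \<omega> b z"
    have "linear_form (\<lambda>w. f w - c * \<omega> b w)"
      using insert.prems(1) linear_form_skew_right[OF s, of b] unfolding linear_form_def by (simp add: algebra_simps)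
    moreover have "\<forall>w\<in>T. (\<forall>s\<in>span Bs. \<omega> s w = 0) \<longrightarrow> f w - c * \<omega> b w = 0"
      using linear_form_proportional[OF s T insert.prems z] unfolding c_def by simp
    ultimately obtain s0 where s0: "s0 \<in> span Bs" "\<forall>w\<in>T. f w - c * \<omega> b w = \<omega> s0 w"
      using insert.IH by blast
    have "s0 + c *s b \<in> span (insert b Bs)"
      using s0(1) span_mono[of Bs "insert b Bs"] by (meson span_add span_scale span_base insertI1 subset_insertI subsetD)
    moreover have "f w = \<omega> (s0 + c *s b) w" if "w \<in> T" for w
      using s0(2) that by (simp add: skew_add_left[OF s] skew_scale_left[OF s] algebra_simps)
    ultimately show ?thesis by blast
  next
    case False
    then have "\<forall>w\<in>T. (\<forall>s\<in>span Bs. \<omega> s w = 0) \<longrightarrow> f w = 0"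
      using insert.prems(2) orthogonal_span_insert[OF s] by blast
    then show ?thesis using insert.IH[OF insert.prems(1)] span_mono[of Bs "insert b Bs"] by blast
  qed
qed

lemma linear_form_represented:
  assumes s: "skew_form \<omega>" and T: "subspace T" and S: "subspace S" and f: "linear_form f"
    and h: "\<forall>w\<in>T. (\<forall>s\<in>S. \<omega> s w = 0) \<longrightarrow> f w = 0"
  shows "\<exists>s\<in>S. \<forall>w\<in>T. f w = \<omega> s w"
proof -
  obtain Bs where Bs: "Bs \<subseteq> S" "independent Bs" "S \<subseteq> span Bs" "card Bs = dim S"
    using basis_exists by blast
  have fin: "finite Bs" using Bs(2) finiteI_independent by blast
  have eq: "span Bs = S" using Bs S by (simp add: span_subspace)
  show ?thesis using linear_form_represented_span[OF s T fin f] h unfolding eq by blast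
qed

lemma direct_sum_complement_exists:
  assumes A: "subspace A" and W: "subspace W" and AW: "A \<subseteq> W"
  obtains M where "direct_sum W A M"
proof -
  obtain BA where BA: "BA \<subseteq> A" "independent BA" "A \<subseteq> span BA" "card BA = dim A"
    using basis_exists by blast
  obtain B where B: "BA \<subseteq> B" "B \<subseteq> W" "independent B" "W \<subseteq> span B"
    using maximal_independent_subset_extend[of BA W] BA AW by blast
  have finB: "finite B" using B(3) finiteI_independent by blast
  have spA: "span BA = A" using BA A by (simp add: span_subspace)
  define M where "M = span (B - BA)"
  have "subspace M" unfolding M_def by simp
  moreover have "M \<subseteq> W" unfolding M_def using B(2) W by (meson Diff_subset span_minimal subset_trans)
  moreover have "A \<inter> M = {0}"
  proof (intro equalityI subsetI)
    fix x :: 'a assume x: "x \<in> A \<inter> M"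
    have r1: "representation B x = representation BA x"
      using representation_extend[OF B(3), of x BA] x spA B(1) by auto
    have r2: "representation B x = representation (B - BA) x"
      using representation_extend[OF B(3), of x "B - BA"] x M_def by auto
    have z: "representation B x b = 0" for b
    proof (rule ccontr)
      assume "representation B x b \<noteq> 0"
      then have "b \<in> BA" "b \<in> B - BA"
        using representation_ne_zero r1 r2 by metis+
      then show False by auto
    qed
    have "x \<in> span B" using x B(1) spA span_mono[of BA B] by auto
    then have "x = (\<Sum>b\<in>B. representation B x b *s b)"
      using sum_representation_eq[OF B(3) _ finB] by auto
    then show "x \<in> {0}" using z by simp
  next
    fix x :: 'a assume "x \<in> {0}" then show "x \<in> A \<inter> M"
      using A M_def by (simp add: subspace_0 span_zero)
  qed
  moreover have "\<forall>w\<in>W. \<exists>a\<in>A. \<exists>m\<in>M. w = a + m"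
  proof
    fix w assume "w \<in> W"
    then have "w \<in> span (BA \<union> (B - BA))" using B by (metis Un_Diff_cancel sup.absorb2 subsetD)
    then show "\<exists>a\<in>A. \<exists>m\<in>M. w = a + m" unfolding span_Un M_def spA by blast
  qed
  ultimately show ?thesis using that A AW unfolding direct_sum_def by blast
qed

lemma dim_le_Suc_dim_kernel:
  assumes A: "subspace A" and g: "linear_form g"
  shows "dim A \<le> Suc (dim {a\<in>A. g a = 0})"
proof (cases "\<forall>a\<in>A. g a = 0")
  case True
  then have "{a\<in>A. g a = 0} = A" by auto
  then show ?thesis by simp
next
  case False
  then obtain a0 where a0: "a0 \<in> A" "g a0 \<noteq> 0" by auto
  define A0 where "A0 = {a\<in>A. g a = 0}"
  have "A \<subseteq> span (insert a0 A0)"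
  proof
    fix a assume a: "a \<in> A"
    define k where "k = g a / g a0"
    have "a - k *s a0 \<in> A0"
      unfolding A0_def using a a0 A g
      by (simp add: subspace_diff subspace_scale linear_form_diff[OF g] k_def) (simp add: linear_form_def)
    then show "a \<in> span (insert a0 A0)"
      using span_breakdown_eq[of a a0 A0] span_base by blast
  qed
  then have "dim A \<le> dim (insert a0 A0)" by (rule subset_le_dim)
  also have "\<dots> \<le> Suc (dim A0)" by (simp add: dim_insert)
  finally show ?thesis unfolding A0_def .
qed

lemma dim_insert_subspace:
  assumes "subspace S" "x \<notin> S"
  shows "dim (insert x S) = Suc (dim S)"
proof -
  have "span S = S" using assms(1) span_eq_iff by blast
  then have "x \<notin> span S" using assms(2) by blast
  then show ?thesis using dim_insert[of x S] by simp
qed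

lemma dim_less_subspace:
  assumes "subspace H" "subspace W" "H \<subseteq> W" "x \<in> W" "x \<notin> H"
  shows "dim H < dim W"
proof -
  have "span H = H" "span W = W" using assms(1,2) span_eq_iff by blast+
  moreover have "H \<subset> W" using assms by auto
  ultimately have "span H \<subset> span W" by metis
  then show ?thesis by (rule dim_psubset)
qed

lemma Suc_dim_le_dim:
  assumes "subspace R" "x \<notin> R" "insert x R \<subseteq> T"
  shows "Suc (dim R) \<le> dim T"
  using dim_insert_subspace[OF assms(1,2)] dim_subset[OF assms(3)] by simp

lemma direct_sum_span_singleton:
  assumes "direct_sum W (span {x}) H" "w \<in> W"
  obtains c where "w - c *s x \<in> H"
proof -
  obtain a h where "a \<in> span {x}" "h \<in> H" "w = a + h"
    using assms unfolding direct_sum_def by blast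
  moreover obtain c where "a = c *s x" using \<open>a \<in> span {x}\<close> span_singleton by blast
  ultimately show ?thesis using that[of c] by simp
qed

lemma sums_subset_subspace:
  assumes "subspace W" "U \<subseteq> W" "U' \<subseteq> W"
  shows "{u + u' |u u'. u \<in> U \<and> u' \<in> U'} \<subseteq> W"
  using assms subspace_add by blast

lemma direct_sum_sums_eq:
  assumes "subspace W" "direct_sum W U U'"
  shows "{u + u' |u u'. u \<in> U \<and> u' \<in> U'} = W"
proof
  show "{u + u' |u u'. u \<in> U \<and> u' \<in> U'} \<subseteq> W"
    using assms by (intro sums_subset_subspace) (auto simp: direct_sum_def)
  show "W \<subseteq> {u + u' |u u'. u \<in> U \<and> u' \<in> U'}"
    using assms(2) unfolding direct_sum_def by blast
qed

lemma dim_direct_sum: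
  assumes "subspace W" "direct_sum W U U'"
  shows "dim W = dim U + dim U'"
  using dim_sums_Int[of U U'] assms direct_sum_sums_eq[OF assms] unfolding direct_sum_def by simp

lemma dim_le_dim_complement:
  assumes H: "subspace H" "direct_sum H K M" and R: "subspace R" "R \<subseteq> H" "R \<inter> M = {0}"
  shows "dim R \<le> dim K"
proof -
  have M: "subspace M" "M \<subseteq> H" using H(2) unfolding direct_sum_def by auto
  have "dim R + dim M = dim {r + m |r m. r \<in> R \<and> m \<in> M}"
    using dim_sums_Int[OF R(1) M(1)] R(3) by simp
  also have "\<dots> \<le> dim H" by (intro dim_subset sums_subset_subspace H(1) R(2) M(2))
  also have "\<dots> = dim K + dim M" by (rule dim_direct_sum[OF H])
  finally show ?thesis by simp
qed

section \<open>Radicals in a pencil of skew forms\<close>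

lemma independent_family_inj_on:
  assumes "independent_family v T" "finite T"
  shows "inj_on v T"
proof (rule inj_onI, rule ccontr)
  fix x y assume xy: "x \<in> T" "y \<in> T" "v x = v y" "x \<noteq> y"
  define c where "c t = (if t = x then 1 else if t = y then -1 else (0::complex))" for t
  have "(\<Sum>t\<in>T. c t *s v t) = (\<Sum>t\<in>{x,y}. c t *s v t)"
    using assms(2) xy by (intro sum.mono_neutral_right) (auto simp: c_def)
  also have "\<dots> = 0" using xy by (simp add: c_def)
  finally have "c x = 0" using assms(1) xy unfolding independent_family_def by blast
  then show False by (simp add: c_def)
qed

lemma card_le_dim_independent_family:
  assumes fin: "finite T" and li: "independent_family v T" and vM: "\<forall>t\<in>T. v t \<in> M"
  shows "card T \<le> dim M"
proof -
  have inj: "inj_on v T" using independent_family_inj_on li fin by blast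
  have "independent (v ` T)"
    unfolding independent_explicit
  proof (intro conjI allI impI ballI)
    show "finite (v ` T)" using fin by simp
    fix c x assume s: "(\<Sum>x\<in>v ` T. c x *s x) = 0" and x: "x \<in> v ` T"
    have "(\<Sum>t\<in>T. c (v t) *s v t) = 0" using s sum.reindex[OF inj, of "\<lambda>x. c x *s x"] by simp
    then have "\<forall>t\<in>T. c (v t) = 0"
      using spec[OF li[unfolded independent_family_def], of "\<lambda>t. c (v t)"] by simp
    then show "c x = 0" using x by auto
  qed
  then have "card (v ` T) \<le> dim M" using vM by (intro independent_card_le_dim) auto
  then show ?thesis using card_image[OF inj] by simp
qed

lemma pencil_null_combination:
  assumes s1: "skew_form \<omega>1" and s2: "skew_form \<omega>2"
    and null: "\<forall>t\<in>insert t0 T. \<forall>m\<in>M. \<omega>1 (v t) m + t * \<omega>2 (v t) m = 0"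
    and T: "finite T" "t0 \<notin> T" "0 \<notin> T"
    and sum0: "(\<Sum>t\<in>insert t0 T. c t *s v t) = 0" and m: "m \<in> M"
  shows "\<omega>1 (\<Sum>t\<in>T. (c t * (t - t0) / t) *s v t) m = 0"
proof -
  have \<omega>1v: "\<omega>1 (v t) m = - t * \<omega>2 (v t) m" if "t \<in> insert t0 T" for t
  proof -
    have "\<omega>1 (v t) m + t * \<omega>2 (v t) m = 0" using null that m by blast
    then show ?thesis by (simp add: eq_neg_iff_add_eq_0)
  qed
  have "(\<Sum>t\<in>insert t0 T. c t * \<omega>2 (v t) m) = 0"
    using arg_cong[OF sum0, of "\<lambda>x. \<omega>2 x m"] by (simp add: skew_sum_left[OF s2] skew_scale_left[OF s2] skew_zero_left[OF s2])
  moreover have "(\<Sum>t\<in>insert t0 T. c t * t * \<omega>2 (v t) m) = 0"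
    using arg_cong[OF sum0, of "\<lambda>x. \<omega>1 x m"] \<omega>1v
    by (simp add: skew_sum_left[OF s1] skew_scale_left[OF s1] skew_zero_left[OF s1] sum_negf mult.assoc)
  moreover have "(\<Sum>t\<in>insert t0 T. c t * (t - t0) * \<omega>2 (v t) m)
      = (\<Sum>t\<in>insert t0 T. c t * t * \<omega>2 (v t) m) - t0 * (\<Sum>t\<in>insert t0 T. c t * \<omega>2 (v t) m)"
    by (simp add: sum_subtractf sum_distrib_left algebra_simps)
  ultimately have "(\<Sum>t\<in>T. c t * (t - t0) * \<omega>2 (v t) m) = 0" using T by simp
  have "\<omega>1 (\<Sum>t\<in>T. (c t * (t - t0) / t) *s v t) m = (\<Sum>t\<in>T. (c t * (t - t0) / t) * (- t * \<omega>2 (v t) m))"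
    using \<omega>1v by (simp add: skew_sum_left[OF s1] skew_scale_left[OF s1])
  also have "\<dots> = (\<Sum>t\<in>T. - (c t * (t - t0) * \<omega>2 (v t) m))"
  proof (rule sum.cong[OF refl])
    fix t assume "t \<in> T"
    then have "t \<noteq> 0" using T(3) by blast
    then show "(c t * (t - t0) / t) * (- t * \<omega>2 (v t) m) = - (c t * (t - t0) * \<omega>2 (v t) m)"
      by (simp add: field_simps)
  qed
  also have "\<dots> = 0" using \<open>(\<Sum>t\<in>T. c t * (t - t0) * \<omega>2 (v t) m) = 0\<close> by (simp add: sum_negf)
  finally show ?thesis .
qed

lemma pencil_null_vectors_independent:
  assumes s1: "skew_form \<omega>1" and s2: "skew_form \<omega>2" and M: "subspace M" and nd: "radical M \<omega>1 = {0}"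
  shows "finite T \<Longrightarrow> (\<forall>t\<in>T. v t \<in> M \<and> v t \<noteq> 0 \<and> (\<forall>m\<in>M. \<omega>1 (v t) m + t * \<omega>2 (v t) m = 0))
     \<Longrightarrow> independent_family v T"
proof (induction T rule: finite_induct)
  case empty
  then show ?case unfolding independent_family_def by simp
next
  case (insert t0 T)
  have vM: "\<forall>t\<in>insert t0 T. v t \<in> M" and vnz: "v t0 \<noteq> 0"
    and null: "\<forall>t\<in>insert t0 T. \<forall>m\<in>M. \<omega>1 (v t) m + t * \<omega>2 (v t) m = 0"
    using insert.prems by auto
  have "0 \<notin> insert t0 T"
  proof
    assume "0 \<in> insert t0 T"
    then have "v 0 \<in> radical M \<omega>1" using vM null unfolding radical_def by auto
    then show False using nd insert.prems \<open>0 \<in> insert t0 T\<close> by auto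
  qed
  show ?case unfolding independent_family_def
  proof (intro allI impI)
    fix c assume sum0: "(\<Sum>t\<in>insert t0 T. c t *s v t) = 0"
    have "(\<Sum>t\<in>T. (c t * (t - t0) / t) *s v t) \<in> radical M \<omega>1"
      using vM M pencil_null_combination[OF s1 s2 null insert.hyps(1,2) _ sum0] \<open>0 \<notin> insert t0 T\<close>
      unfolding radical_def by (auto intro!: subspace_sum subspace_scale)
    then have "(\<Sum>t\<in>T. (c t * (t - t0) / t) *s v t) = 0" using nd by simp
    moreover have "independent_family v T" using insert.IH insert.prems by simp
    ultimately have "\<forall>t\<in>T. c t * (t - t0) / t = 0"
      unfolding independent_family_def by (blast dest: spec[where x="\<lambda>t. c t * (t - t0) / t"])
    then have cT: "\<forall>t\<in>T. c t = 0" using insert.hyps(2) \<open>0 \<notin> insert t0 T\<close> by auto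
    then have "c t0 *s v t0 = 0" using sum0 insert.hyps by simp
    then show "\<forall>t\<in>insert t0 T. c t = 0" using cT vnz by simp
  qed
qed

lemma finite_singular_pencil_parameters:
  assumes s1: "skew_form \<omega>1" and s2: "skew_form \<omega>2" and M: "subspace M" and nd: "radical M \<omega>1 = {0}"
  shows "finite {t. \<exists>v\<in>M. v \<noteq> 0 \<and> (\<forall>m\<in>M. \<omega>1 v m + t * \<omega>2 v m = 0)}" (is "finite ?B")
proof (rule ccontr)
  assume inf: "infinite ?B"
  obtain T where T: "finite T" "card T = Suc (dim M)" "T \<subseteq> ?B"
    using infinite_arbitrarily_large[OF inf, of "Suc (dim M)"] by blast
  define P where "P t v \<longleftrightarrow> v\<in>M \<and> v \<noteq> 0 \<and> (\<forall>m\<in>M. \<omega>1 v m + t * \<omega>2 v m = 0)" for t v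
  define v where "v t = (SOME v. P t v)" for t
  have Pv: "P t (v t)" if "t \<in> T" for t
  proof -
    have "\<exists>v. P t v" using that T(3) unfolding P_def by blast
    then show ?thesis unfolding v_def by (rule someI_ex)
  qed
  have all: "\<forall>t\<in>T. v t \<in> M \<and> v t \<noteq> 0 \<and> (\<forall>m\<in>M. \<omega>1 (v t) m + t * \<omega>2 (v t) m = 0)"
    using Pv unfolding P_def by blast
  have li: "independent_family v T" by (rule pencil_null_vectors_independent[OF s1 s2 M nd T(1) all])
  have "card T \<le> dim M" by (rule card_le_dim_independent_family[OF T(1) li]) (use all in blast)
  then show False using T(2) by simp
qed

lemma radical_complement_trivial:
  assumes s: "skew_form \<omega>" and M: "direct_sum H (radical H \<omega>) M"
  shows "radical M \<omega> = {0}"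
proof (intro equalityI subsetI)
  fix m assume m: "m \<in> radical M \<omega>"
  have mH: "m \<in> H" "m \<in> M" using m M unfolding radical_def direct_sum_def by auto
  have "\<omega> m h = 0" if "h \<in> H" for h
  proof -
    obtain a m' where am: "a \<in> radical H \<omega>" "m' \<in> M" "h = a + m'"
      using M \<open>h \<in> H\<close> unfolding direct_sum_def by blast
    have "\<omega> m a = 0" using am(1) mH(1) radical_iff_orthogonal[OF s] by blast
    moreover have "\<omega> m m' = 0" using m am(2) unfolding radical_def by auto
    ultimately show ?thesis using am(3) by (simp add: skew_add_right[OF s])
  qed
  then have "m \<in> radical H \<omega> \<inter> M" using mH unfolding radical_def by blast
  then show "m \<in> {0}" using M unfolding direct_sum_def by blast
next
  fix m :: 'a assume "m \<in> {0}"
  then show "m \<in> radical M \<omega>"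
    using M unfolding radical_def direct_sum_def by (simp add: subspace_0 skew_zero_left[OF s])
qed

text \<open>All but finitely many members of the pencil are nondegenerate on a complement of the radical
  of \<open>\<omega>1\<close>, so their radicals are no larger.\<close>
lemma exists_pencil_radical_dim_le:
  assumes s1: "skew_form \<omega>1" and s2: "skew_form \<omega>2" and H: "subspace H"
  obtains t where "t \<noteq> 0" "dim (radical H (pencil 1 t \<omega>1 \<omega>2)) \<le> dim (radical H \<omega>1)"
proof -
  obtain M where M: "direct_sum H (radical H \<omega>1) M"
    using direct_sum_complement_exists[OF subspace_radical[OF s1 H] H radical_subset] .
  then have sM: "subspace M" "M \<subseteq> H" unfolding direct_sum_def by auto
  define Bad where "Bad = {t. \<exists>v\<in>M. v \<noteq> 0 \<and> (\<forall>m\<in>M. \<omega>1 v m + t * \<omega>2 v m = 0)}"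
  have "finite (Bad \<union> {0})"
    using finite_singular_pencil_parameters[OF s1 s2 sM(1) radical_complement_trivial[OF s1 M]]
    unfolding Bad_def by simp
  then obtain t where t: "t \<notin> Bad \<union> {0}"
    using ex_new_if_finite[OF infinite_UNIV_char_0[where 'a=complex]] by blast
  define R where "R = radical H (pencil 1 t \<omega>1 \<omega>2)"
  have R: "subspace R" "R \<subseteq> H"
    unfolding R_def by (rule subspace_radical[OF skew_form_pencil[OF s1 s2] H], rule radical_subset)
  have "R \<inter> M = {0}"
  proof (intro equalityI subsetI)
    fix v assume v: "v \<in> R \<inter> M"
    then have "\<forall>m\<in>M. \<omega>1 v m + t * \<omega>2 v m = 0" using sM(2) unfolding R_def radical_def pencil_def by auto
    then show "v \<in> {0}" using v t unfolding Bad_def by blast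
  next
    fix v :: 'a assume "v \<in> {0}"
    then show "v \<in> R \<inter> M" using R sM by (simp add: subspace_0)
  qed
  then have "dim R \<le> dim (radical H \<omega>1)" by (rule dim_le_dim_complement[OF H M R(1,2)])
  then show ?thesis using that t unfolding R_def by blast
qed

lemma span_image_sum_repr:
  assumes "x \<in> span (f ` A)" "finite A"
  shows "\<exists>c. x = (\<Sum>i\<in>A. c i *s f i)"
proof -
  let ?T = "{x. \<exists>c. x = (\<Sum>i\<in>A. c i *s f i)}"
  have "subspace ?T"
    unfolding subspace_def
  proof (intro conjI ballI allI)
    show "0 \<in> ?T" by (rule CollectI, rule exI[of _ "\<lambda>_. 0"]) simp
    fix x y assume "x \<in> ?T" "y \<in> ?T"
    then obtain c1 c2 where "x = (\<Sum>i\<in>A. c1 i *s f i)" "y = (\<Sum>i\<in>A. c2 i *s f i)" by blast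
    then have "x + y = (\<Sum>i\<in>A. (c1 i + c2 i) *s f i)" by (simp add: sum.distrib scale_left_distrib)
    then show "x + y \<in> ?T" by (intro CollectI exI[of _ "\<lambda>i. c1 i + c2 i"])
  next
    fix c x assume "x \<in> ?T"
    then obtain c1 where "x = (\<Sum>i\<in>A. c1 i *s f i)" by blast
    then have "c *s x = (\<Sum>i\<in>A. (c * c1 i) *s f i)" by (simp add: scale_sum_right)
    then show "c *s x \<in> ?T" by (intro CollectI exI[of _ "\<lambda>i. c * c1 i"])
  qed
  moreover have "f ` A \<subseteq> ?T"
  proof
    fix x assume "x \<in> f ` A"
    then obtain k where k: "k \<in> A" "x = f k" by blast
    have "(\<Sum>i\<in>A. (if i = k then 1 else 0) *s f i) = f k"
      using assms(2) k(1) by (simp add: if_distrib[where f="\<lambda>c. c *s _"] sum.delta cong: if_cong)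
    then show "x \<in> ?T" using k by (intro CollectI exI[of _ "\<lambda>i. if i = k then 1 else 0"]) simp
  qed
  ultimately have "span (f ` A) \<subseteq> ?T" by (rule span_minimal[rotated])
  then show ?thesis using assms(1) by blast
qed

lemma sum_in_span_image: "(\<Sum>i\<in>A. c i *s f i) \<in> span (f ` A)"
  by (intro span_sum span_scale span_base) auto

lemma independent_family_not_in_span:
  assumes "independent_family f {..<Suc k}"
  shows "f k \<notin> span (f ` {..<k})"
proof
  assume "f k \<in> span (f ` {..<k})"
  then obtain c where c: "f k = (\<Sum>i<k. c i *s f i)" using span_image_sum_repr by blast
  define c' where "c' i = (if i = k then -1 else c i)" for i
  have "(\<Sum>i<Suc k. c' i *s f i) = (\<Sum>i<k. c i *s f i) - f k"
    by (simp add: c'_def)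
  also have "\<dots> = 0" using c by simp
  finally have "c' k = 0" using assms unfolding independent_family_def by blast
  then show False by (simp add: c'_def)
qed

lemma independent_family_extend:
  assumes li: "independent_family f {..<k}" and nk: "f k \<notin> span (f ` {..<k})"
  shows "independent_family f {..<Suc k}"
  unfolding independent_family_def
proof (intro allI impI)
  fix c assume s: "(\<Sum>i<Suc k. c i *s f i) = 0"
  have ck: "c k = 0"
  proof (rule ccontr)
    assume ck: "c k \<noteq> 0"
    from s have e: "c k *s f k = - (\<Sum>i<k. c i *s f i)" by (simp add: add_eq_0_iff2 add.commute)
    have "- (\<Sum>i<k. c i *s f i) \<in> span (f ` {..<k})" by (intro span_neg sum_in_span_image)
    then have "(1 / c k) *s (c k *s f k) \<in> span (f ` {..<k})" unfolding e by (rule span_scale)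
    then show False using nk ck by simp
  qed
  then have "(\<Sum>i<k. c i *s f i) = 0" using s by simp
  then have "\<forall>i<k. c i = 0" using li unfolding independent_family_def by blast
  then show "\<forall>i\<in>{..<Suc k}. c i = 0" using ck by (auto simp: less_Suc_eq)
qed

lemma independent_family_nonzero: "independent_family f T \<Longrightarrow> finite T \<Longrightarrow> t \<in> T \<Longrightarrow> f t \<noteq> 0"
proof
  assume a: "independent_family f T" "finite T" "t \<in> T" "f t = 0"
  define c where "c i = (if i = t then 1 else (0::complex))" for i
  have "(\<Sum>i\<in>T. c i *s f i) = 0" using a
    by (simp add: c_def if_distrib[where f="\<lambda>c. c *s _"] sum.delta cong: if_cong)
  then have "c t = 0" using a unfolding independent_family_def by blast
  then show False by (simp add: c_def)
qed

section \<open>Isotropic splittings\<close>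

lemma isotropic_zero: "skew_form \<omega> \<Longrightarrow> isotropic \<omega> {0}"
  unfolding isotropic_def by simp

lemma isotropic_splitting_trivial:
  assumes "skew_form \<omega>1" "skew_form \<omega>2" "subspace W" "isotropic \<omega>1 W" "isotropic \<omega>2 W"
  shows "isotropic_splitting W W {0} \<omega>1 \<omega>2"
  using assms isotropic_zero[OF assms(1)] isotropic_zero[OF assms(2)] subspace_0[OF assms(3)]
  unfolding isotropic_splitting_def direct_sum_def by auto

lemma isotropic_splitting_transfer:
  assumes "isotropic_splitting W U U' \<sigma> \<tau>"
    and "\<And>X. isotropic \<sigma> X \<Longrightarrow> isotropic \<tau> X \<Longrightarrow> isotropic \<omega>1 X \<and> isotropic \<omega>2 X"
  shows "isotropic_splitting W U U' \<omega>1 \<omega>2"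
  using assms unfolding isotropic_splitting_def by blast

lemma direct_sum_sums:
  assumes W: "subspace W" and XY: "direct_sum W X Y" and AB: "direct_sum X A B" and CC': "direct_sum Y C C'"
  shows "direct_sum W {a + c |a c. a \<in> A \<and> c \<in> C} {b + c |b c. b \<in> B \<and> c \<in> C'}"
proof -
  have X: "subspace X" "subspace Y" "X \<subseteq> W" "Y \<subseteq> W" "X \<inter> Y = {0}" "\<forall>w\<in>W. \<exists>x\<in>X. \<exists>y\<in>Y. w = x + y"
    using XY unfolding direct_sum_def by blast+
  have A: "subspace A" "subspace B" "A \<subseteq> X" "B \<subseteq> X" "A \<inter> B = {0}" "\<forall>x\<in>X. \<exists>a\<in>A. \<exists>b\<in>B. x = a + b"
    using AB unfolding direct_sum_def by blast+
  have C: "subspace C" "subspace C'" "C \<subseteq> Y" "C' \<subseteq> Y" "C \<inter> C' = {0}" "\<forall>y\<in>Y. \<exists>c\<in>C. \<exists>c'\<in>C'. y = c + c'"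
    using CC' unfolding direct_sum_def by blast+
  define U where "U = {a + c |a c. a \<in> A \<and> c \<in> C}"
  define U' where "U' = {b + c |b c. b \<in> B \<and> c \<in> C'}"
  have "U \<subseteq> W" unfolding U_def using A(3) C(3) X(3,4) by (intro sums_subset_subspace W) auto
  moreover have "U' \<subseteq> W" unfolding U'_def using A(4) C(4) X(3,4) by (intro sums_subset_subspace W) auto
  moreover have "subspace U" "subspace U'"
    unfolding U_def U'_def using A(1,2) C(1,2) by (simp_all add: subspace_sums)
  moreover have "U \<inter> U' = {0}"
  proof (intro equalityI subsetI)
    fix z assume "z \<in> U \<inter> U'"
    then obtain a c b c' where z: "z = a + c" "z = b + c'" "a \<in> A" "c \<in> C" "b \<in> B" "c' \<in> C'"
      unfolding U_def U'_def by blast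
    have "a - b \<in> X" using z(3,5) A(3,4) X(1) subspace_diff by blast
    moreover have "c' - c \<in> Y" using z(4,6) C(3,4) X(2) subspace_diff by blast
    moreover have "a - b = c' - c" using z(1,2) by (simp add: algebra_simps)
    ultimately have "c' - c \<in> X \<inter> Y" by simp
    then have "c' - c = 0" using X(5) by blast
    then have "a - b = 0" "c' - c = 0" using \<open>a - b = c' - c\<close> by simp_all
    then have "a \<in> A \<inter> B" "c \<in> C \<inter> C'" using z by auto
    then show "z \<in> {0}" using z(1) A(5) C(5) by auto
  next
    fix z :: 'a assume "z \<in> {0}"
    moreover have "(0::'a) = 0 + 0" "0 \<in> A" "0 \<in> B" "0 \<in> C" "0 \<in> C'"
      using A(1,2) C(1,2) subspace_0 by auto
    ultimately show "z \<in> U \<inter> U'" unfolding U_def U'_def by blast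
  qed
  moreover have "\<forall>w\<in>W. \<exists>u\<in>U. \<exists>u'\<in>U'. w = u + u'"
  proof
    fix w assume "w \<in> W"
    then obtain x y where xy: "x \<in> X" "y \<in> Y" "w = x + y" using X(6) by blast
    obtain a b where ab: "a \<in> A" "b \<in> B" "x = a + b" using A(6) xy(1) by blast
    obtain c c' where cc: "c \<in> C" "c' \<in> C'" "y = c + c'" using C(6) xy(2) by blast
    have "a + c \<in> U" "b + c' \<in> U'" unfolding U_def U'_def using ab cc by blast+
    moreover have "w = (a + c) + (b + c')" using xy(3) ab(3) cc(3) by (simp add: algebra_simps)
    ultimately show "\<exists>u\<in>U. \<exists>u'\<in>U'. w = u + u'" by blast
  qed
  ultimately show ?thesis unfolding direct_sum_def U_def U'_def by blast
qed

lemma isotropic_splitting_orthogonal_sum: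
  assumes s1: "skew_form \<omega>1" and s2: "skew_form \<omega>2" and W: "subspace W"
    and XY: "direct_sum W X Y" and orth: "\<forall>x\<in>X. \<forall>y\<in>Y. \<omega>1 x y = 0 \<and> \<omega>2 x y = 0"
    and AB: "isotropic_splitting X A B \<omega>1 \<omega>2" and CC': "isotropic_splitting Y C C' \<omega>1 \<omega>2"
  shows "isotropic_splitting W {a + c |a c. a \<in> A \<and> c \<in> C} {b + c |b c. b \<in> B \<and> c \<in> C'} \<omega>1 \<omega>2"
proof -
  have sub: "A \<subseteq> X" "B \<subseteq> X" "C \<subseteq> Y" "C' \<subseteq> Y"
    using AB CC' unfolding isotropic_splitting_def direct_sum_def by blast+
  have "isotropic \<omega> {a + c |a c. a \<in> A \<and> c \<in> C} \<and> isotropic \<omega> {b + c |b c. b \<in> B \<and> c \<in> C'}"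
    if s: "skew_form \<omega>" and orth\<omega>: "\<forall>x\<in>X. \<forall>y\<in>Y. \<omega> x y = 0"
      and iso: "isotropic \<omega> A" "isotropic \<omega> B" "isotropic \<omega> C" "isotropic \<omega> C'" for \<omega>
    using sub orth\<omega> by (intro conjI isotropic_sums[OF s] iso) blast+
  then have "isotropic \<omega>1 {a + c |a c. a \<in> A \<and> c \<in> C} \<and> isotropic \<omega>1 {b + c |b c. b \<in> B \<and> c \<in> C'}"
    "isotropic \<omega>2 {a + c |a c. a \<in> A \<and> c \<in> C} \<and> isotropic \<omega>2 {b + c |b c. b \<in> B \<and> c \<in> C'}"
    using s1 s2 orth AB CC' unfolding isotropic_splitting_def by blast+
  moreover have "direct_sum W {a + c |a c. a \<in> A \<and> c \<in> C} {b + c |b c. b \<in> B \<and> c \<in> C'}"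
    using direct_sum_sums[OF W XY] AB CC' unfolding isotropic_splitting_def by blast
  ultimately show ?thesis unfolding isotropic_splitting_def by blast
qed

section \<open>Pencils with a nondegenerate member\<close>

lemma exists_pencil_operator:
  assumes s1: "skew_form \<omega>1" and s2: "skew_form \<omega>2" and W: "subspace W" and nd: "radical W \<omega>1 = {0}"
  shows "\<exists>S. (\<forall>x. S x \<in> W) \<and> (\<forall>x. \<forall>w\<in>W. \<omega>2 x w = \<omega>1 (S x) w)
     \<and> (\<forall>x y. S (x + y) = S x + S y) \<and> (\<forall>c x. S (c *s x) = c *s S x)"
proof -
  have ex: "\<exists>s\<in>W. \<forall>w\<in>W. \<omega>2 x w = \<omega>1 s w" for x
  proof (rule linear_form_represented[OF s1 W W linear_form_skew_right[OF s2]], intro ballI impI)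
    fix w assume w: "w \<in> W" "\<forall>s\<in>W. \<omega>1 s w = 0"
    have "w \<in> radical W \<omega>1" unfolding radical_def using w skew_swap[OF s1, of _ w] by auto
    then show "\<omega>2 x w = 0" using nd by (simp add: skew_zero_right[OF s2])
  qed
  define S where "S x = (SOME s. s\<in>W \<and> (\<forall>w\<in>W. \<omega>2 x w = \<omega>1 s w))" for x
  have S: "S x \<in> W \<and> (\<forall>w\<in>W. \<omega>2 x w = \<omega>1 (S x) w)" for x
    unfolding S_def using someI_ex[OF ex[of x, unfolded Bex_def]] .
  have uniq: "a = b" if "a \<in> W" "b \<in> W" "\<forall>w\<in>W. \<omega>1 a w = \<omega>1 b w" for a b
  proof -
    have "a - b \<in> radical W \<omega>1" unfolding radical_def using that W
      by (simp add: subspace_diff skew_diff_left[OF s1])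
    then show ?thesis using nd by simp
  qed
  have S\<omega>: "S x \<in> W" "w \<in> W \<Longrightarrow> \<omega>1 (S x) w = \<omega>2 x w" for x w using S by auto
  have "S (x + y) = S x + S y" for x y
    by (rule uniq) (use S\<omega> W subspace_add in \<open>auto simp: skew_add_left[OF s1] skew_add_left[OF s2]\<close>)
  moreover have "S (c *s x) = c *s S x" for c x
    by (rule uniq) (use S\<omega> W subspace_scale in \<open>auto simp: skew_scale_left[OF s1] skew_scale_left[OF s2]\<close>)
  ultimately show ?thesis using S by blast
qed

context
  fixes \<omega> :: "'a \<Rightarrow> 'a \<Rightarrow> complex" and W A B :: "'a set"
  assumes s: "skew_form \<omega>" and W: "subspace W" and nd: "radical W \<omega> = {0}"
    and A: "subspace A" "A \<subseteq> W" "isotropic \<omega> A" and B: "subspace B" "B \<subseteq> W" "isotropic \<omega> B"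
    and ndA: "\<And>a. a \<in> A \<Longrightarrow> \<forall>b\<in>B. \<omega> a b = 0 \<Longrightarrow> a = 0"
    and ndB: "\<And>b. b \<in> B \<Longrightarrow> \<forall>a\<in>A. \<omega> a b = 0 \<Longrightarrow> b = 0"
begin

lemma dual_pair_direct_sum: "direct_sum {a + b |a b. a \<in> A \<and> b \<in> B} A B"
proof -
  have "A \<subseteq> {a + b |a b. a \<in> A \<and> b \<in> B}" "B \<subseteq> {a + b |a b. a \<in> A \<and> b \<in> B}"
    using A(1) B(1) subspace_0 by force+
  moreover have "A \<inter> B = {0}"
  proof (intro equalityI subsetI)
    fix c assume "c \<in> A \<inter> B"
    then show "c \<in> {0}" using ndB A(3) unfolding isotropic_def by blast
  qed (use A(1) B(1) subspace_0 in auto)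
  ultimately show ?thesis unfolding direct_sum_def using A(1) B(1) by blast
qed

lemma dual_pair_complement_decomposition:
  assumes z: "z \<in> W"
  shows "\<exists>a\<in>A. \<exists>b\<in>B. z - a - b \<in> orthogonal_complement W \<omega> (A \<union> B)"
proof -
  have "\<exists>b\<in>B. \<forall>a'\<in>A. \<omega> z a' = \<omega> b a'"
  proof (rule linear_form_represented[OF s A(1) B(1) linear_form_skew_right[OF s]], intro ballI impI)
    fix a' assume "a' \<in> A" "\<forall>b\<in>B. \<omega> b a' = 0"
    then have "a' = 0" using ndA skew_swap[OF s, of _ a'] by (metis neg_equal_0_iff_equal)
    then show "\<omega> z a' = 0" by (simp add: skew_zero_right[OF s])
  qed
  then obtain b where b: "b \<in> B" "\<forall>a'\<in>A. \<omega> z a' = \<omega> b a'" by blast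
  have "\<exists>a\<in>A. \<forall>b'\<in>B. \<omega> z b' = \<omega> a b'"
    by (rule linear_form_represented[OF s B(1) A(1) linear_form_skew_right[OF s]])
      (use ndB skew_zero_right[OF s] in blast)
  then obtain a where a: "a \<in> A" "\<forall>b'\<in>B. \<omega> z b' = \<omega> a b'" by blast
  have "\<omega> x (z - a - b) = 0" if "x \<in> A \<union> B" for x
  proof -
    have "\<omega> x (z - a - b) = - \<omega> z x + \<omega> a x + \<omega> b x"
      using skew_swap[OF s, of x] by (simp add: skew_diff_right[OF s])
    then show ?thesis using that a b A(3) B(3) skew_swap[OF s, of x] unfolding isotropic_def by auto
  qed
  moreover have "z - a - b \<in> W" using z a(1) b(1) A(2) B(2) W subspace_diff by blast
  ultimately show ?thesis using a(1) b(1) unfolding orthogonal_complement_def by blast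
qed

lemma dual_pair_orthogonal_direct_sum:
  "direct_sum W {a + b |a b. a \<in> A \<and> b \<in> B} (orthogonal_complement W \<omega> (A \<union> B))"
proof -
  define P where "P = orthogonal_complement W \<omega> (A \<union> B)"
  define X where "X = {a + b |a b. a \<in> A \<and> b \<in> B}"
  have P: "subspace P" "P \<subseteq> W"
    unfolding P_def by (rule subspace_orthogonal_complement[OF s W], rule orthogonal_complement_subset)
  have X: "subspace X" "X \<subseteq> W" unfolding X_def using A B by (simp_all add: subspace_sums sums_subset_subspace W)
  have "X \<inter> P = {0}"
  proof (intro equalityI subsetI)
    fix y assume "y \<in> X \<inter> P"
    then obtain a b where y: "y = a + b" "a \<in> A" "b \<in> B" "y \<in> P" unfolding X_def by blast
    have "\<forall>x\<in>A. \<omega> x b = 0"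
    proof
      fix x assume "x \<in> A"
      then have "\<omega> x a = 0" "\<omega> x (a + b) = 0"
        using y A(3) unfolding isotropic_def P_def orthogonal_complement_def by auto
      then show "\<omega> x b = 0" by (simp add: skew_add_right[OF s])
    qed
    moreover have "\<forall>x\<in>B. \<omega> a x = 0"
    proof
      fix x assume "x \<in> B"
      then have "\<omega> x b = 0" "\<omega> x (a + b) = 0"
        using y B(3) unfolding isotropic_def P_def orthogonal_complement_def by auto
      then show "\<omega> a x = 0" using skew_swap[OF s, of x a] by (simp add: skew_add_right[OF s])
    qed
    ultimately have "a = 0" "b = 0" using y(2,3) ndA ndB by blast+
    then show "y \<in> {0}" using y(1) by simp
  qed (use X(1) P(1) subspace_0 in auto)
  moreover have "\<forall>z\<in>W. \<exists>x\<in>X. \<exists>p\<in>P. z = x + p"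
  proof
    fix z assume "z \<in> W"
    then obtain a b where "a \<in> A" "b \<in> B" "z - a - b \<in> P"
      using dual_pair_complement_decomposition unfolding P_def by blast
    moreover have "z = (a + b) + (z - a - b)" by simp
    ultimately show "\<exists>x\<in>X. \<exists>p\<in>P. z = x + p" unfolding X_def by blast
  qed
  ultimately show ?thesis unfolding direct_sum_def P_def[symmetric] X_def[symmetric] using X P by blast
qed

lemma dual_pair_complement_nondegenerate: "radical (orthogonal_complement W \<omega> (A \<union> B)) \<omega> = {0}"
proof (intro equalityI subsetI)
  fix y assume y: "y \<in> radical (orthogonal_complement W \<omega> (A \<union> B)) \<omega>"
  then have yP: "y \<in> orthogonal_complement W \<omega> (A \<union> B)" unfolding radical_def by blast
  have "\<omega> y z = 0" if z: "z \<in> W" for z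
  proof -
    obtain a b where ab: "a \<in> A" "b \<in> B" "z - a - b \<in> orthogonal_complement W \<omega> (A \<union> B)"
      using dual_pair_complement_decomposition[OF z] by blast
    have "\<omega> a y = 0" "\<omega> b y = 0" using yP ab unfolding orthogonal_complement_def by auto
    then have "\<omega> y a = 0" "\<omega> y b = 0" using skew_swap[OF s, of y] by (metis neg_equal_0_iff_equal)+
    moreover have "\<omega> y (z - a - b) = 0" using y ab(3) unfolding radical_def by blast
    ultimately show ?thesis by (simp add: skew_diff_right[OF s])
  qed
  moreover have "y \<in> W" using yP unfolding orthogonal_complement_def by blast
  ultimately have "y \<in> radical W \<omega>" unfolding radical_def by blast
  then show "y \<in> {0}" using nd by simp
qed (use subspace_0[OF subspace_orthogonal_complement[OF s W]] in \<open>auto simp: radical_def skew_zero_left[OF s]\<close>)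

end

lemmas dual_pair_decomposition =
  dual_pair_direct_sum dual_pair_orthogonal_direct_sum dual_pair_complement_nondegenerate

end

locale regular_pencil = complex_fd_space scale Basis
  for scale :: "complex \<Rightarrow> 'a::ab_group_add \<Rightarrow> 'a" (infixr \<open>*s\<close> 75) and Basis +
  fixes \<omega>1 \<omega>2 :: "'a \<Rightarrow> 'a \<Rightarrow> complex" and W :: "'a set" and S :: "'a \<Rightarrow> 'a"
  assumes s1: "skew_form \<omega>1" and s2: "skew_form \<omega>2" and W: "subspace W" and nd: "radical W \<omega>1 = {0}"
    and SW: "\<And>x. S x \<in> W" and Srep: "\<And>x w. w \<in> W \<Longrightarrow> \<omega>2 x w = \<omega>1 (S x) w"
    and Sadd: "\<And>x y. S (x + y) = S x + S y" and Ssc: "\<And>c x. S (c *s x) = c *s S x"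
begin

lemma S_zero: "S 0 = 0"
  using Sadd[of 0 0] by simp

lemma S_pow_in: "x \<in> W \<Longrightarrow> (S^^i) x \<in> W"
  by (induction i) (auto simp: SW)

lemma S_self_adjoint: assumes "x \<in> W" "y \<in> W" shows "\<omega>1 (S x) y = \<omega>1 x (S y)"
proof -
  have "\<omega>1 (S x) y = \<omega>2 x y" using Srep assms by simp
  also have "\<dots> = - \<omega>2 y x" by (rule skew_swap[OF s2])
  also have "\<omega>2 y x = \<omega>1 (S y) x" using Srep assms by simp
  also have "\<omega>1 (S y) x = - \<omega>1 x (S y)" by (rule skew_swap[OF s1])
  finally show ?thesis by simp
qed

lemma S_pow_self_adjoint: assumes "x \<in> W" "y \<in> W" shows "\<omega>1 ((S^^i) x) y = \<omega>1 x ((S^^i) y)"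
  using assms
proof (induction i arbitrary: y)
  case 0 then show ?case by simp
next
  case (Suc i)
  have "\<omega>1 ((S^^Suc i) x) y = \<omega>1 (S ((S^^i) x)) y" by simp
  also have "\<dots> = \<omega>1 ((S^^i) x) (S y)" using S_self_adjoint S_pow_in Suc.prems by blast
  also have "\<dots> = \<omega>1 x ((S^^i) (S y))" using Suc SW by blast
  also have "(S^^i) (S y) = (S^^Suc i) y" by (simp add: funpow_swap1)
  finally show ?case .
qed

abbreviation krylov :: "'a \<Rightarrow> nat \<Rightarrow> 'a set" where
  "krylov u d \<equiv> span ((\<lambda>i. (S^^i) u) ` {..<d})"

lemma krylov_subset: "u \<in> W \<Longrightarrow> krylov u d \<subseteq> W"
  using S_pow_in W by (intro span_minimal) auto

lemma krylov_invariant: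
  assumes u: "u \<in> W" and cl: "(S^^d) u \<in> krylov u d" and x: "x \<in> krylov u d"
  shows "S x \<in> krylov u d"
  using x
proof (induction rule: span_induct)
  case base
  show ?case unfolding subspace_def
    by (simp add: S_zero Sadd Ssc span_zero span_add span_scale)
next
  case (step x)
  then obtain i where i: "i < d" "x = (S^^i) u" by blast
  have "S x = (S^^Suc i) u" using i by simp
  moreover have "(S^^Suc i) u \<in> krylov u d"
  proof (cases "Suc i < d")
    case True
    then have "(S^^Suc i) u \<in> (\<lambda>i. (S^^i) u) ` {..<d}" by blast
    then show ?thesis by (rule span_base)
  next
    case False then have "Suc i = d" using i by simp
    then show ?thesis using cl by simp
  qed
  ultimately show ?case by simp
qed

lemma isotropic1_krylov: assumes u: "u \<in> W" shows "isotropic \<omega>1 (krylov u d)"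
proof (rule isotropic_span[OF s1], unfold isotropic_def, intro ballI)
  fix x y assume "x \<in> (\<lambda>i. (S^^i) u) ` {..<d}" "y \<in> (\<lambda>i. (S^^i) u) ` {..<d}"
  then obtain i j where ij: "x = (S^^i) u" "y = (S^^j) u" by blast
  have "\<omega>1 x y = \<omega>1 u ((S^^i) ((S^^j) u))" unfolding ij using S_pow_self_adjoint u S_pow_in by blast
  also have "\<dots> = \<omega>1 u ((S^^(i+j)) u)" by (simp add: funpow_add)
  finally have a: "\<omega>1 x y = \<omega>1 u ((S^^(i+j)) u)" .
  have "\<omega>1 u ((S^^(i+j)) u) = \<omega>1 ((S^^(i+j)) u) u" using S_pow_self_adjoint u by simp
  also have "\<dots> = - \<omega>1 u ((S^^(i+j)) u)" by (rule skew_swap[OF s1])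
  finally have "\<omega>1 u ((S^^(i+j)) u) = 0" by simp
  then show "\<omega>1 x y = 0" using a by simp
qed

lemma isotropic2_krylov:
  assumes u: "u \<in> W" and cl: "(S^^d) u \<in> krylov u d"
  shows "isotropic \<omega>2 (krylov u d)"
  unfolding isotropic_def
proof (intro ballI)
  fix x y assume x: "x \<in> krylov u d" and y: "y \<in> krylov u d"
  have "\<omega>2 x y = \<omega>1 (S x) y" using Srep y krylov_subset[OF u] by blast
  also have "\<dots> = 0" using isotropic1_krylov[OF u] krylov_invariant[OF u cl x] y unfolding isotropic_def by blast
  finally show "\<omega>2 x y = 0" .
qed

lemma exists_maximal_krylov:
  assumes "W \<noteq> {0}"
  obtains v e where "v \<in> W" "independent_family (\<lambda>i. (S^^i) v) {..<Suc e}"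
    "\<And>u. u \<in> W \<Longrightarrow> independent_family (\<lambda>i. (S^^i) u) {..<Suc e} \<Longrightarrow> (S^^Suc e) u \<in> krylov u (Suc e)"
proof -
  define D where "D = {k. \<exists>u\<in>W. independent_family (\<lambda>i. (S^^i) u) {..<k}}"
  have "k \<le> dim W" if k: "k \<in> D" for k
  proof -
    obtain u where u: "u \<in> W" "independent_family (\<lambda>i. (S^^i) u) {..<k}" using k unfolding D_def by blast
    have "card {..<k} \<le> dim W" by (rule card_le_dim_independent_family) (use u S_pow_in in auto)
    then show ?thesis by simp
  qed
  then have finD: "finite D" by (meson finite_nat_set_iff_bounded_le)
  obtain u0 where u0: "u0 \<in> W" "u0 \<noteq> 0" using assms W subspace_0 by blast
  then have "independent_family (\<lambda>i. (S^^i) u0) {..<1}" unfolding independent_family_def by simp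
  then have "1 \<in> D" unfolding D_def using u0 by blast
  define d where "d = Max D"
  have "d \<in> D" "1 \<le> d" unfolding d_def using finD \<open>1 \<in> D\<close> by (auto intro: Max_in Max_ge)
  then obtain v where v: "v \<in> W" "independent_family (\<lambda>i. (S^^i) v) {..<d}" unfolding D_def by blast
  obtain e where e: "d = Suc e" using \<open>1 \<le> d\<close> by (metis Suc_le_D One_nat_def)
  have "(S^^d) u \<in> krylov u d" if "u \<in> W" "independent_family (\<lambda>i. (S^^i) u) {..<d}" for u
  proof (rule ccontr)
    assume "(S^^d) u \<notin> krylov u d"
    then have "Suc d \<in> D" using independent_family_extend[OF that(2)] that(1) unfolding D_def by blast
    then show False using Max_ge[OF finD, of "Suc d"] unfolding d_def by simp
  qed
  then show ?thesis using that v e by blast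
qed

lemma exists_krylov_dual_vector:
  assumes v: "v \<in> W" "independent_family (\<lambda>i. (S^^i) v) {..<Suc e}"
  obtains w where "w \<in> W" "\<omega>1 ((S^^e) v) w = 1" "\<forall>i<e. \<omega>1 ((S^^i) v) w = 0"
proof -
  have "\<exists>w0\<in>W. (\<forall>s\<in>krylov v e. \<omega>1 s w0 = 0) \<and> \<omega>1 ((S^^e) v) w0 \<noteq> 0"
  proof (rule ccontr)
    assume "\<not> ?thesis"
    then have "\<forall>w\<in>W. (\<forall>s\<in>krylov v e. \<omega>1 s w = 0) \<longrightarrow> \<omega>1 ((S^^e) v) w = 0" by blast
    then obtain s where s: "s \<in> krylov v e" "\<forall>w\<in>W. \<omega>1 ((S^^e) v) w = \<omega>1 s w"
      using linear_form_represented[OF s1 W subspace_span linear_form_skew_right[OF s1]] by blast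
    have "(S^^e) v - s \<in> radical W \<omega>1"
      unfolding radical_def using s S_pow_in v(1) krylov_subset[OF v(1), of e] W
      by (auto simp: subspace_diff skew_diff_left[OF s1])
    then have "(S^^e) v = s" using nd by simp
    then show False using independent_family_not_in_span[OF v(2)] s(1) by simp
  qed
  then obtain w0 where w0: "w0 \<in> W" "\<forall>s\<in>krylov v e. \<omega>1 s w0 = 0" "\<omega>1 ((S^^e) v) w0 \<noteq> 0" by blast
  define w where "w = (1 / \<omega>1 ((S^^e) v) w0) *s w0"
  have "w \<in> W" unfolding w_def using w0 W subspace_scale by blast
  moreover have "\<omega>1 ((S^^e) v) w = 1" unfolding w_def using w0(3) by (simp add: skew_scale_right[OF s1])
  moreover have "\<omega>1 ((S^^i) v) w = 0" if "i < e" for i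
  proof -
    have "(S^^i) v \<in> krylov v e" using that by (intro span_base) blast
    then show ?thesis unfolding w_def using w0(2) by (simp add: skew_scale_right[OF s1])
  qed
  ultimately show ?thesis using that by blast
qed

lemma krylov_pairing:
  assumes "v \<in> W" "w \<in> W" "\<omega>1 ((S^^e) v) w = 1" "\<forall>i<e. \<omega>1 ((S^^i) v) w = 0"
    and "i + j \<le> e"
  shows "\<omega>1 ((S^^i) v) ((S^^j) w) = (if i + j = e then 1 else 0)"
proof -
  have "\<omega>1 ((S^^i) v) ((S^^j) w) = \<omega>1 ((S^^j) ((S^^i) v)) w"
    using S_pow_self_adjoint[of "(S^^i) v" w j] S_pow_in assms(1,2) by simp
  also have "\<dots> = \<omega>1 ((S^^(j + i)) v) w" by (simp add: funpow_add)
  finally show ?thesis using assms(3-5) by (auto simp: add.commute)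
qed

text \<open>The pairing matrix of the two Krylov families is antitriangular with unit antidiagonal,
  so the two Krylov subspaces are in duality under \<open>\<omega>1\<close>.\<close>
lemma krylov_dual_pair:
  assumes v: "v \<in> W" and w: "w \<in> W"
    and dual: "\<omega>1 ((S^^e) v) w = 1" "\<forall>i<e. \<omega>1 ((S^^i) v) w = 0"
  shows "independent_family (\<lambda>j. (S^^j) w) {..<Suc e}"
    and "\<And>x. x \<in> krylov w (Suc e) \<Longrightarrow> \<forall>a\<in>krylov v (Suc e). \<omega>1 a x = 0 \<Longrightarrow> x = 0"
    and "\<And>y. y \<in> krylov v (Suc e) \<Longrightarrow> \<forall>b\<in>krylov w (Suc e). \<omega>1 y b = 0 \<Longrightarrow> y = 0"
proof -
  define M where "M i j = \<omega>1 ((S^^i) v) ((S^^j) w)" for i j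
  have low: "M i j = 0" "M j i = 0" if "i + j < Suc e - 1" for i j
    using krylov_pairing[OF v w dual, of i j] krylov_pairing[OF v w dual, of j i] that
    unfolding M_def by simp_all
  have diag: "M i (Suc e - 1 - i) \<noteq> 0" "M (Suc e - 1 - i) i \<noteq> 0" if "i < Suc e" for i
    using krylov_pairing[OF v w dual, of i "e - i"] krylov_pairing[OF v w dual, of "e - i" i] that
    unfolding M_def by simp_all
  have pair_right: "\<omega>1 ((S^^i) v) (\<Sum>j<Suc e. c j *s (S^^j) w) = (\<Sum>j<Suc e. c j * M i j)" for i c
    unfolding M_def by (simp add: skew_sum_right[OF s1] skew_scale_right[OF s1] del: sum.lessThan_Suc)
  have pair_left: "\<omega>1 (\<Sum>i<Suc e. c i *s (S^^i) v) ((S^^j) w) = (\<Sum>i<Suc e. c i * M i j)" for j c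
    unfolding M_def by (simp add: skew_sum_left[OF s1] skew_scale_left[OF s1] del: sum.lessThan_Suc)
  show "independent_family (\<lambda>j. (S^^j) w) {..<Suc e}"
    unfolding independent_family_def
  proof (intro allI impI)
    fix c assume "(\<Sum>j\<in>{..<Suc e}. c j *s (S^^j) w) = 0"
    then have "(\<Sum>j<Suc e. c j * M i j) = 0" if "i < Suc e" for i
      using pair_right[of i c] by (simp add: skew_zero_right[OF s1] del: sum.lessThan_Suc)
    then have "\<forall>j<Suc e. c j = 0" using antitriangular_system_trivial[of "Suc e" M c, OF low(1) diag(1)] by blast
    then show "\<forall>j\<in>{..<Suc e}. c j = 0" by simp
  qed
  show "x = 0" if x: "x \<in> krylov w (Suc e)" and h: "\<forall>a\<in>krylov v (Suc e). \<omega>1 a x = 0" for x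
  proof -
    obtain c where c: "x = (\<Sum>j<Suc e. c j *s (S^^j) w)" using span_image_sum_repr[OF x] by auto
    have "(\<Sum>j<Suc e. c j * M i j) = 0" if "i < Suc e" for i
    proof -
      have "(S^^i) v \<in> krylov v (Suc e)" using that by (intro span_base) blast
      then show ?thesis using h pair_right[of i c] c by simp
    qed
    then have "\<forall>j<Suc e. c j = 0" using antitriangular_system_trivial[of "Suc e" M c, OF low(1) diag(1)] by blast
    then show ?thesis using c by simp
  qed
  show "y = 0" if y: "y \<in> krylov v (Suc e)" and h: "\<forall>b\<in>krylov w (Suc e). \<omega>1 y b = 0" for y
  proof -
    obtain c where c: "y = (\<Sum>i<Suc e. c i *s (S^^i) v)" using span_image_sum_repr[OF y] by auto
    have "(\<Sum>i<Suc e. c i * M i j) = 0" if "j < Suc e" for j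
    proof -
      have "(S^^j) w \<in> krylov w (Suc e)" using that by (intro span_base) blast
      then show ?thesis using h pair_left[of c j] c by simp
    qed
    then have "\<forall>i<Suc e. c i = 0"
      using antitriangular_system_trivial[of "Suc e" "\<lambda>j i. M i j" c, OF low(2) diag(2)] by blast
    then show ?thesis using c by simp
  qed
qed

lemma exists_krylov_dual_pair:
  assumes "W \<noteq> {0}"
  obtains A B where "subspace A" "A \<subseteq> W" "subspace B" "B \<subseteq> W" "A \<noteq> {0}"
    "isotropic \<omega>1 A" "isotropic \<omega>2 A" "isotropic \<omega>1 B" "isotropic \<omega>2 B"
    "\<forall>a\<in>A. S a \<in> A" "\<forall>b\<in>B. S b \<in> B"
    "\<And>a. a \<in> A \<Longrightarrow> \<forall>b\<in>B. \<omega>1 a b = 0 \<Longrightarrow> a = 0"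
    "\<And>b. b \<in> B \<Longrightarrow> \<forall>a\<in>A. \<omega>1 a b = 0 \<Longrightarrow> b = 0"
proof -
  obtain v e where v: "v \<in> W" "independent_family (\<lambda>i. (S^^i) v) {..<Suc e}"
    and closed: "\<And>u. u \<in> W \<Longrightarrow> independent_family (\<lambda>i. (S^^i) u) {..<Suc e} \<Longrightarrow> (S^^Suc e) u \<in> krylov u (Suc e)"
    using exists_maximal_krylov[OF assms] by blast
  obtain w where w: "w \<in> W" "\<omega>1 ((S^^e) v) w = 1" "\<forall>i<e. \<omega>1 ((S^^i) v) w = 0"
    using exists_krylov_dual_vector[OF v] by blast
  note pair = krylov_dual_pair[OF v(1) w(1-3)]
  have clA: "(S^^Suc e) v \<in> krylov v (Suc e)" by (rule closed[OF v])
  have clB: "(S^^Suc e) w \<in> krylov w (Suc e)" by (rule closed[OF w(1) pair(1)])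
  have "v \<in> krylov v (Suc e)" by (rule span_base) (auto intro: image_eqI[of v _ 0])
  moreover have "v \<noteq> 0" using independent_family_nonzero[OF v(2)] by fastforce
  ultimately have "krylov v (Suc e) \<noteq> {0}" by blast
  from that[OF subspace_span krylov_subset[OF v(1)] subspace_span krylov_subset[OF w(1)] this
      isotropic1_krylov[OF v(1)] isotropic2_krylov[OF v(1) clA] isotropic1_krylov[OF w(1)] isotropic2_krylov[OF w(1) clB]]
  show ?thesis using krylov_invariant[OF v(1) clA] krylov_invariant[OF w(1) clB] pair(2,3) by blast
qed

lemma orthogonal_complement_invariant:
  assumes "\<forall>x\<in>X. S x \<in> X" "x \<in> X" "p \<in> orthogonal_complement W \<omega>1 X"
  shows "\<omega>2 x p = 0"
  using assms Srep[of p x] unfolding orthogonal_complement_def by auto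

lemma regular_step:
  assumes "W \<noteq> {0}"
  obtains A B P where "isotropic_splitting {a + b |a b. a \<in> A \<and> b \<in> B} A B \<omega>1 \<omega>2"
    "direct_sum W {a + b |a b. a \<in> A \<and> b \<in> B} P"
    "\<forall>x\<in>{a + b |a b. a \<in> A \<and> b \<in> B}. \<forall>p\<in>P. \<omega>1 x p = 0 \<and> \<omega>2 x p = 0"
    "radical P \<omega>1 = {0}" "dim P < dim W"
proof -
  obtain A B where sub: "subspace A" "A \<subseteq> W" "subspace B" "B \<subseteq> W" "A \<noteq> {0}"
    and iso: "isotropic \<omega>1 A" "isotropic \<omega>2 A" "isotropic \<omega>1 B" "isotropic \<omega>2 B"
    and inv: "\<forall>a\<in>A. S a \<in> A" "\<forall>b\<in>B. S b \<in> B"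
    and pairing: "\<And>a. a \<in> A \<Longrightarrow> \<forall>b\<in>B. \<omega>1 a b = 0 \<Longrightarrow> a = 0"
      "\<And>b. b \<in> B \<Longrightarrow> \<forall>a\<in>A. \<omega>1 a b = 0 \<Longrightarrow> b = 0"
    using exists_krylov_dual_pair[OF assms] by blast
  define X where "X = {a + b |a b. a \<in> A \<and> b \<in> B}"
  define P where "P = orthogonal_complement W \<omega>1 (A \<union> B)"
  note dec = dual_pair_decomposition[OF s1 W nd sub(1,2) iso(1) sub(3,4) iso(3) pairing, folded X_def P_def]
  have split: "isotropic_splitting X A B \<omega>1 \<omega>2"
    using dec(1) iso unfolding isotropic_splitting_def by blast
  have orth: "\<forall>x\<in>X. \<forall>p\<in>P. \<omega>1 x p = 0 \<and> \<omega>2 x p = 0"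
  proof (intro ballI)
    fix x p assume "x \<in> X" "p \<in> P"
    then obtain a b where ab: "a \<in> A" "b \<in> B" "x = a + b" unfolding X_def by blast
    have "\<forall>y\<in>A \<union> B. S y \<in> A \<union> B" using inv by blast
    then have "\<omega>2 a p = 0" "\<omega>2 b p = 0"
      using orthogonal_complement_invariant ab \<open>p \<in> P\<close> unfolding P_def by blast+
    moreover have "\<omega>1 a p = 0" "\<omega>1 b p = 0"
      using ab \<open>p \<in> P\<close> unfolding P_def orthogonal_complement_def by blast+
    ultimately show "\<omega>1 x p = 0 \<and> \<omega>2 x p = 0"
      using ab(3) by (simp add: skew_add_left[OF s1] skew_add_left[OF s2])
  qed
  obtain a where a: "a \<in> A" "a \<noteq> 0" using sub(1,5) subspace_0 by blast
  have "dim P < dim W"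
  proof (rule dim_less_subspace)
    show "subspace P" "P \<subseteq> W" using dec(2) unfolding direct_sum_def by blast+
    show "subspace W" "a \<in> W" using W a sub(2) by blast+
    have "a \<in> X" unfolding X_def using a(1) sub(3) subspace_0 by force
    then show "a \<notin> P" using a(2) dec(2) unfolding direct_sum_def by blast
  qed
  from that[OF split[unfolded X_def] dec(2)[unfolded X_def] orth[unfolded X_def] dec(3) this]
  show ?thesis .
qed
end

context complex_fd_space
begin

lemma regular_isotropic_splitting:
  assumes s1: "skew_form \<omega>1" and s2: "skew_form \<omega>2"
  shows "subspace W \<Longrightarrow> radical W \<omega>1 = {0} \<Longrightarrow> \<exists>U U'. isotropic_splitting W U U' \<omega>1 \<omega>2"
proof (induction "dim W" arbitrary: W rule: less_induct)
  case less
  show ?case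
  proof (cases "W = {0}")
    case True
    then show ?thesis
      using isotropic_splitting_trivial[OF s1 s2 less.prems(1)] isotropic_zero[OF s1] isotropic_zero[OF s2]
      by blast
  next
    case False
    obtain S where S: "\<forall>x. S x \<in> W" "\<forall>x. \<forall>w\<in>W. \<omega>2 x w = \<omega>1 (S x) w"
        "\<forall>x y. S (x + y) = S x + S y" "\<forall>c x. S (c *s x) = c *s S x"
      using exists_pencil_operator[OF s1 s2 less.prems] by blast
    interpret regular_pencil scale Basis \<omega>1 \<omega>2 W S
      by unfold_locales (use S s1 s2 less.prems in auto)
    obtain A B P where ABP: "isotropic_splitting {a + b |a b. a \<in> A \<and> b \<in> B} A B \<omega>1 \<omega>2"
      "direct_sum W {a + b |a b. a \<in> A \<and> b \<in> B} P"
      "\<forall>x\<in>{a + b |a b. a \<in> A \<and> b \<in> B}. \<forall>p\<in>P. \<omega>1 x p = 0 \<and> \<omega>2 x p = 0"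
      "radical P \<omega>1 = {0}" "dim P < dim W"
      using regular_step[OF False] by blast
    have "subspace P" using ABP(2) unfolding direct_sum_def by blast
    then obtain C C' where "isotropic_splitting P C C' \<omega>1 \<omega>2" using less.hyps ABP(4,5) by blast
    then show ?thesis
      using isotropic_splitting_orthogonal_sum[OF s1 s2 less.prems(1) ABP(2,3,1)] by blast
  qed
qed

section \<open>Reduction to the nondegenerate case\<close>

lemma radical_pencil_scaled: "a \<noteq> 0 \<Longrightarrow> radical W (pencil a 0 \<omega>1 \<omega>2) = radical W \<omega>1"
  unfolding radical_def pencil_def by auto

lemma radical_pencil_zero: "radical W (pencil 0 0 \<omega>1 \<omega>2) = W"
  unfolding radical_def pencil_def by auto

lemma radical_kernel_subset:
  assumes s1: "skew_form \<omega>1" and s2: "skew_form \<omega>2" and W: "subspace W"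
    and y0: "y0 \<in> W" "\<omega>2 x y0 \<noteq> 0"
    and h: "h \<in> radical (orthogonal_complement W \<omega>2 {x}) \<omega>1" "\<omega>1 h y0 = 0"
  shows "h \<in> radical W \<omega>1"
proof -
  have "\<omega>1 h z = 0" if z: "z \<in> W" for z
  proof -
    define c where "c = \<omega>2 x z / \<omega>2 x y0"
    have "z - c *s y0 \<in> orthogonal_complement W \<omega>2 {x}"
      unfolding orthogonal_complement_def c_def using z y0 W
      by (simp add: subspace_diff subspace_scale skew_diff_right[OF s2] skew_scale_right[OF s2])
    then have "\<omega>1 h (z - c *s y0) = 0" using h(1) unfolding radical_def by blast
    then show ?thesis using h(2) by (simp add: skew_diff_right[OF s1] skew_scale_right[OF s1])
  qed
  moreover have "h \<in> W"
    using h(1) radical_subset[of "orthogonal_complement W \<omega>2 {x}" \<omega>1]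
    unfolding orthogonal_complement_def by blast
  ultimately show ?thesis unfolding radical_def by blast
qed

text \<open>Passing to the hyperplane \<open>\<omega>2 x\<^sup>\<perp>\<close> turns \<open>x\<close> into a radical vector of every member of the
  pencil with nonzero \<open>\<omega>2\<close>-coefficient.\<close>
lemma Suc_dim_radical_le_kernel:
  assumes s1: "skew_form \<omega>1" and s2: "skew_form \<omega>2" and W: "subspace W"
    and x: "x \<in> radical W \<omega>1" and y: "y \<in> W" "\<omega>2 x y \<noteq> 0" and b: "b \<noteq> 0"
  shows "Suc (dim (radical W (pencil a b \<omega>1 \<omega>2)))
    \<le> dim (radical (orthogonal_complement W \<omega>2 {x}) (pencil a b \<omega>1 \<omega>2))"
proof -
  define \<omega> where "\<omega> = pencil a b \<omega>1 \<omega>2"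
  define H where "H = orthogonal_complement W \<omega>2 {x}"
  have s: "skew_form \<omega>" unfolding \<omega>_def by (rule skew_form_pencil[OF s1 s2])
  have xW: "x \<in> W" using x unfolding radical_def by blast
  have HW: "H \<subseteq> W" unfolding H_def by (rule orthogonal_complement_subset)
  have \<omega>x: "\<omega> x z = b * \<omega>2 x z" if "z \<in> W" for z
    using x that unfolding \<omega>_def pencil_def radical_def by simp
  have "insert x (radical W \<omega>) \<subseteq> radical H \<omega>"
  proof
    fix z assume "z \<in> insert x (radical W \<omega>)"
    then consider "z = x" | "z \<in> radical W \<omega>" by blast
    then show "z \<in> radical H \<omega>"
    proof cases
      case 1
      have "x \<in> H" unfolding H_def orthogonal_complement_def using xW by (simp add: skew_self[OF s2])
      moreover have "\<omega> x h = 0" if "h \<in> H" for h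
        using that \<omega>x[of h] unfolding H_def orthogonal_complement_def by auto
      ultimately show ?thesis using 1 unfolding radical_def by blast
    next
      case 2
      then have zW: "z \<in> W" and zr: "\<forall>u\<in>W. \<omega> z u = 0" unfolding radical_def by auto
      have "\<omega> x z = 0" using zr xW skew_swap[OF s, of x z] by simp
      then have "z \<in> H" unfolding H_def orthogonal_complement_def using \<omega>x[OF zW] b zW by simp
      then show ?thesis using zr HW unfolding radical_def by blast
    qed
  qed
  moreover have "\<omega> x y \<noteq> 0" using \<omega>x[OF y(1)] y b by simp
  then have "x \<notin> radical W \<omega>" using y(1) unfolding radical_def by blast
  ultimately have "Suc (dim (radical W \<omega>)) \<le> dim (radical H \<omega>)"
    using Suc_dim_le_dim[OF subspace_radical[OF s W]] by blast
  then show ?thesis unfolding \<omega>_def H_def .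
qed

lemma minimal_radical_radical_isotropic:
  assumes s1: "skew_form \<omega>1" and s2: "skew_form \<omega>2" and W: "subspace W"
    and g: "minimal_radical W \<omega>1 \<omega>2"
  shows "isotropic \<omega>2 (radical W \<omega>1)"
  unfolding isotropic_def
proof (intro ballI, rule ccontr)
  fix x k assume x: "x \<in> radical W \<omega>1" and k: "k \<in> radical W \<omega>1" and xk: "\<omega>2 x k \<noteq> 0"
  define H where "H = orthogonal_complement W \<omega>2 {x}"
  have H: "subspace H" "H \<subseteq> W"
    unfolding H_def by (rule subspace_orthogonal_complement[OF s2 W], rule orthogonal_complement_subset)
  obtain t where t: "t \<noteq> 0" "dim (radical H (pencil 1 t \<omega>1 \<omega>2)) \<le> dim (radical H \<omega>1)"
    using exists_pencil_radical_dim_le[OF s1 s2 H(1)] by blast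
  have kW: "k \<in> W" using k unfolding radical_def by blast
  have "Suc (dim (radical W (pencil 1 t \<omega>1 \<omega>2))) \<le> dim (radical H (pencil 1 t \<omega>1 \<omega>2))"
    unfolding H_def by (rule Suc_dim_radical_le_kernel[OF s1 s2 W x kW xk t(1)])
  moreover have "Suc (dim (radical H \<omega>1)) \<le> dim (radical W \<omega>1)"
  proof (rule Suc_dim_le_dim[OF subspace_radical[OF s1 H(1)]])
    show "k \<notin> radical H \<omega>1" using xk unfolding radical_def H_def orthogonal_complement_def by blast
    have "h \<in> radical W \<omega>1" if h: "h \<in> radical H \<omega>1" for h
    proof (rule radical_kernel_subset[OF s1 s2 W kW xk, folded H_def, OF h])
      have "h \<in> W" using h H(2) unfolding radical_def by blast
      then show "\<omega>1 h k = 0" using k unfolding radical_iff_orthogonal[OF s1] by blast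
    qed
    then show "insert k (radical H \<omega>1) \<subseteq> radical W \<omega>1" using k by blast
  qed
  moreover have "dim (radical W \<omega>1) \<le> dim (radical W (pencil 1 t \<omega>1 \<omega>2))"
    using g unfolding minimal_radical_def by blast
  ultimately show False using t(2) by simp
qed

lemma minimal_radical_kernel:
  assumes s1: "skew_form \<omega>1" and s2: "skew_form \<omega>2" and W: "subspace W"
    and g: "minimal_radical W \<omega>1 \<omega>2"
    and x0: "x0 \<in> radical W \<omega>1" and y0: "y0 \<in> W" "\<omega>2 x0 y0 \<noteq> 0"
  shows "minimal_radical (orthogonal_complement W \<omega>2 {x0}) \<omega>1 \<omega>2"
proof -
  define H where "H = orthogonal_complement W \<omega>2 {x0}"
  have H: "subspace H" unfolding H_def by (rule subspace_orthogonal_complement[OF s2 W])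
  have "dim (radical H \<omega>1) \<le> Suc (dim {h\<in>radical H \<omega>1. \<omega>1 h y0 = 0})"
    by (rule dim_le_Suc_dim_kernel[OF subspace_radical[OF s1 H] linear_form_skew_left[OF s1]])
  also have "dim {h\<in>radical H \<omega>1. \<omega>1 h y0 = 0} \<le> dim (radical W \<omega>1)"
    using radical_kernel_subset[OF s1 s2 W y0] unfolding H_def by (intro dim_subset) blast
  finally have grow: "dim (radical H \<omega>1) \<le> Suc (dim (radical W \<omega>1))" by simp
  have "dim (radical H \<omega>1) \<le> dim (radical H (pencil a b \<omega>1 \<omega>2))" for a b
  proof (cases "b = 0")
    case True
    then show ?thesis
      using radical_pencil_scaled[of a H \<omega>1 \<omega>2] radical_pencil_zero[of H \<omega>1 \<omega>2]
        dim_subset[OF radical_subset[of H \<omega>1]] by (cases "a = 0") auto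
  next
    case False
    have "Suc (dim (radical W (pencil a b \<omega>1 \<omega>2))) \<le> dim (radical H (pencil a b \<omega>1 \<omega>2))"
      unfolding H_def by (rule Suc_dim_radical_le_kernel[OF s1 s2 W x0 y0 False])
    moreover have "dim (radical W \<omega>1) \<le> dim (radical W (pencil a b \<omega>1 \<omega>2))"
      using g unfolding minimal_radical_def by blast
    ultimately show ?thesis using grow by simp
  qed
  then show ?thesis unfolding minimal_radical_def H_def by blast
qed

lemma dim_radical_direct_sum_span:
  assumes s: "skew_form \<omega>" and W: "subspace W" and x0: "x0 \<in> radical W \<omega>" "x0 \<noteq> 0"
    and H: "direct_sum W (span {x0}) H"
  shows "dim (radical W \<omega>) = Suc (dim (radical H \<omega>))"
proof -
  have sH: "subspace H" "H \<subseteq> W" using H unfolding direct_sum_def by blast+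
  have x0H: "x0 \<notin> H" using H x0(2) span_base[of x0 "{x0}"] unfolding direct_sum_def by blast
  have x0r: "\<omega> x0 y = 0" "\<omega> y x0 = 0" if "y \<in> W" for y
  proof -
    show "\<omega> x0 y = 0" using x0(1) that unfolding radical_def by blast
    then show "\<omega> y x0 = 0" using skew_swap[OF s, of y x0] by simp
  qed
  have "radical W \<omega> = span (insert x0 (radical H \<omega>))"
  proof (rule span_subspace[symmetric])
    show "subspace (radical W \<omega>)" by (rule subspace_radical[OF s W])
    show "insert x0 (radical H \<omega>) \<subseteq> radical W \<omega>"
    proof (intro insert_subsetI x0(1) subsetI)
      fix h assume h: "h \<in> radical H \<omega>"
      have "\<omega> h w = 0" if w: "w \<in> W" for w
      proof -
        obtain c where "w - c *s x0 \<in> H" using direct_sum_span_singleton[OF H w] .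
        then have "\<omega> h (w - c *s x0) = 0" using h unfolding radical_def by blast
        moreover have "h \<in> W" using h sH(2) unfolding radical_def by blast
        then have "\<omega> h x0 = 0" by (rule x0r(2))
        ultimately show ?thesis by (simp add: skew_diff_right[OF s] skew_scale_right[OF s])
      qed
      then show "h \<in> radical W \<omega>" using h sH(2) unfolding radical_def by blast
    qed
    show "radical W \<omega> \<subseteq> span (insert x0 (radical H \<omega>))"
    proof
      fix y assume y: "y \<in> radical W \<omega>"
      then have yW: "y \<in> W" unfolding radical_def by blast
      obtain c where c: "y - c *s x0 \<in> H" using direct_sum_span_singleton[OF H yW] .
      have "\<omega> (y - c *s x0) k = 0" if "k \<in> H" for k
        using that y x0r sH(2) unfolding radical_def by (auto simp: skew_diff_left[OF s] skew_scale_left[OF s])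
      then have "y - c *s x0 \<in> radical H \<omega>" using c unfolding radical_def by blast
      then show "y \<in> span (insert x0 (radical H \<omega>))" using span_breakdown_eq span_base by blast
    qed
  qed
  moreover have "x0 \<notin> radical H \<omega>" using x0H unfolding radical_def by blast
  ultimately show ?thesis
    using dim_insert_subspace[OF subspace_radical[OF s sH(1)]] by simp
qed

lemma minimal_radical_common_radical:
  assumes s1: "skew_form \<omega>1" and s2: "skew_form \<omega>2" and W: "subspace W"
    and g: "minimal_radical W \<omega>1 \<omega>2"
    and x0: "x0 \<in> radical W \<omega>1" "x0 \<in> radical W \<omega>2" "x0 \<noteq> 0" and H: "direct_sum W (span {x0}) H"
  shows "minimal_radical H \<omega>1 \<omega>2"
  unfolding minimal_radical_def
proof (intro allI)
  fix a b
  have "x0 \<in> radical W (pencil a b \<omega>1 \<omega>2)" using x0 unfolding radical_def pencil_def by auto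
  then have "dim (radical W (pencil a b \<omega>1 \<omega>2)) = Suc (dim (radical H (pencil a b \<omega>1 \<omega>2)))"
    by (rule dim_radical_direct_sum_span[OF skew_form_pencil[OF s1 s2] W _ x0(3) H])
  moreover have "dim (radical W \<omega>1) = Suc (dim (radical H \<omega>1))"
    by (rule dim_radical_direct_sum_span[OF s1 W x0(1,3) H])
  moreover have "dim (radical W \<omega>1) \<le> dim (radical W (pencil a b \<omega>1 \<omega>2))"
    using g unfolding minimal_radical_def by blast
  ultimately show "dim (radical H \<omega>1) \<le> dim (radical H (pencil a b \<omega>1 \<omega>2))" by simp
qed

lemma splitting_extend_common_radical:
  assumes s1: "skew_form \<omega>1" and s2: "skew_form \<omega>2" and W: "subspace W"
    and x0: "x0 \<in> radical W \<omega>1" "x0 \<in> radical W \<omega>2" and H: "direct_sum W (span {x0}) H"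
    and split: "isotropic_splitting H U V \<omega>1 \<omega>2" and rad: "radical H \<omega>1 \<subseteq> U"
  shows "\<exists>U U'. isotropic_splitting W U U' \<omega>1 \<omega>2 \<and> radical W \<omega>1 \<subseteq> U"
proof -
  have HW: "H \<subseteq> W" using H unfolding direct_sum_def by blast
  have x0r: "\<omega>1 x0 z = 0" "\<omega>2 x0 z = 0" if "z \<in> W" for z
    using x0 that unfolding radical_def by blast+
  have orth: "\<forall>x\<in>span {x0}. \<forall>h\<in>H. \<omega>1 x h = 0 \<and> \<omega>2 x h = 0"
  proof (intro ballI)
    fix x h assume "x \<in> span {x0}" "h \<in> H"
    then obtain c where "x = c *s x0" "h \<in> W" using span_singleton HW by blast
    then show "\<omega>1 x h = 0 \<and> \<omega>2 x h = 0"
      using x0r by (simp add: skew_scale_left[OF s1] skew_scale_left[OF s2])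
  qed
  have "isotropic \<omega>1 {x0}" "isotropic \<omega>2 {x0}"
    unfolding isotropic_def by (simp_all add: skew_self[OF s1] skew_self[OF s2])
  then have "isotropic_splitting (span {x0}) (span {x0}) {0} \<omega>1 \<omega>2"
    by (intro isotropic_splitting_trivial[OF s1 s2 subspace_span] isotropic_span[OF s1] isotropic_span[OF s2])
  note sum = isotropic_splitting_orthogonal_sum[OF s1 s2 W H orth this split]
  have "radical W \<omega>1 \<subseteq> {a + u |a u. a \<in> span {x0} \<and> u \<in> U}"
  proof
    fix y assume y: "y \<in> radical W \<omega>1"
    then have yW: "y \<in> W" unfolding radical_def by blast
    obtain c where c: "y - c *s x0 \<in> H" using direct_sum_span_singleton[OF H yW] .
    have "\<omega>1 (y - c *s x0) k = 0" if "k \<in> H" for k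
      using that y x0r HW unfolding radical_def by (auto simp: skew_diff_left[OF s1] skew_scale_left[OF s1])
    then have "y - c *s x0 \<in> U" using c rad unfolding radical_def by blast
    moreover have "c *s x0 \<in> span {x0}" by (simp add: span_base span_scale)
    moreover have "y = c *s x0 + (y - c *s x0)" by simp
    ultimately show "y \<in> {a + u |a u. a \<in> span {x0} \<and> u \<in> U}" by blast
  qed
  then show ?thesis using sum by blast
qed

context
  fixes \<omega>1 \<omega>2 :: "'a \<Rightarrow> 'a \<Rightarrow> complex" and W U V :: "'a set" and x0 y :: 'a
  assumes s1: "skew_form \<omega>1" and s2: "skew_form \<omega>2" and W: "subspace W"
    and split: "isotropic_splitting (orthogonal_complement W \<omega>2 {x0}) U V \<omega>1 \<omega>2"
    and x0: "x0 \<in> U" "x0 \<in> radical W \<omega>1"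
    and y: "y \<in> W" "\<omega>2 x0 y = 1" "\<forall>v\<in>V. \<omega>1 v y = 0"
begin

text \<open>\<open>y\<close> complements the hyperplane \<open>\<omega>2 x0\<^sup>\<perp>\<close>, and shifting \<open>v\<close> by \<open>\<omega>2 y v\<close> times the
  \<open>\<omega>1\<close>-radical vector \<open>x0\<close> makes it \<open>\<omega>2\<close>-orthogonal to \<open>y\<close>.\<close>
lemma adjoin_subspace: "subspace {v + \<omega>2 y v *s x0 + c *s y |v c. v \<in> V}"
  unfolding subspace_def
proof (intro conjI ballI allI)
  have sV: "subspace V" using split unfolding isotropic_splitting_def direct_sum_def by blast
  show "0 \<in> {v + \<omega>2 y v *s x0 + c *s y |v c. v \<in> V}"
    using subspace_0[OF sV] by (force simp: skew_zero_right[OF s2])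
  fix p q k
  assume "p \<in> {v + \<omega>2 y v *s x0 + c *s y |v c. v \<in> V}"
  then obtain v1 c1 where p: "p = v1 + \<omega>2 y v1 *s x0 + c1 *s y" "v1 \<in> V" by blast
  have "k *s p = (k *s v1) + \<omega>2 y (k *s v1) *s x0 + (k * c1) *s y"
    using p by (simp add: skew_scale_right[OF s2] algebra_simps)
  moreover have "k *s v1 \<in> V" using p sV subspace_scale by blast
  ultimately show "k *s p \<in> {v + \<omega>2 y v *s x0 + c *s y |v c. v \<in> V}" by blast
  assume "q \<in> {v + \<omega>2 y v *s x0 + c *s y |v c. v \<in> V}"
  then obtain v2 c2 where q: "q = v2 + \<omega>2 y v2 *s x0 + c2 *s y" "v2 \<in> V" by blast
  have "p + q = (v1 + v2) + \<omega>2 y (v1 + v2) *s x0 + (c1 + c2) *s y"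
    using p q by (simp add: skew_add_right[OF s2] algebra_simps)
  moreover have "v1 + v2 \<in> V" using p q sV subspace_add by blast
  ultimately show "p + q \<in> {v + \<omega>2 y v *s x0 + c *s y |v c. v \<in> V}" by blast
qed

lemma adjoin_direct_sum: "direct_sum W U {v + \<omega>2 y v *s x0 + c *s y |v c. v \<in> V}"
proof -
  define H where "H = orthogonal_complement W \<omega>2 {x0}"
  define U' where "U' = {v + \<omega>2 y v *s x0 + c *s y |v c. v \<in> V}"
  have sU: "subspace U" "U \<subseteq> H" and sV: "subspace V" "V \<subseteq> H"
    and UV: "U \<inter> V = {0}" "\<forall>h\<in>H. \<exists>u\<in>U. \<exists>v\<in>V. h = u + v"
    using split unfolding isotropic_splitting_def direct_sum_def H_def by blast+
  have HW: "H \<subseteq> W" unfolding H_def by (rule orthogonal_complement_subset)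
  have x0W: "x0 \<in> W" using x0(2) unfolding radical_def by blast
  have vH: "v \<in> W" "\<omega>2 x0 v = 0" if "v \<in> V" for v
    using that sV(2) HW unfolding H_def orthogonal_complement_def by auto
  have "U' \<subseteq> W"
  proof
    fix p assume "p \<in> U'"
    then obtain v c where "p = v + \<omega>2 y v *s x0 + c *s y" "v \<in> V" unfolding U'_def by blast
    then show "p \<in> W" using vH x0W y(1) W by (simp add: subspace_add subspace_scale)
  qed
  moreover have "U \<inter> U' = {0}"
  proof (intro equalityI subsetI)
    fix p assume "p \<in> U \<inter> U'"
    then obtain v c where p: "p \<in> U" "p = v + \<omega>2 y v *s x0 + c *s y" "v \<in> V" unfolding U'_def by blast
    have "\<omega>2 x0 p = 0" using p(1) sU(2) unfolding H_def orthogonal_complement_def by blast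
    moreover have "\<omega>2 x0 p = c"
      using p(2) vH[OF p(3)] y(2) by (simp add: skew_add_right[OF s2] skew_scale_right[OF s2] skew_self[OF s2])
    ultimately have c0: "c = 0" by simp
    then have "v = p - \<omega>2 y v *s x0" using p(2) by simp
    moreover have "p - \<omega>2 y v *s x0 \<in> U" using p(1) x0(1) sU(1) by (simp add: subspace_diff subspace_scale)
    ultimately have "v \<in> U \<inter> V" using p(3) by simp
    then show "p \<in> {0}" using UV(1) p(2) c0 by (simp add: skew_zero_right[OF s2])
  next
    fix p :: 'a assume "p \<in> {0}"
    then show "p \<in> U \<inter> U'"
      using subspace_0[OF adjoin_subspace] subspace_0[OF sU(1)] unfolding U'_def by blast
  qed
  moreover have "\<forall>z\<in>W. \<exists>u\<in>U. \<exists>u'\<in>U'. z = u + u'"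
  proof
    fix z assume z: "z \<in> W"
    define c where "c = \<omega>2 x0 z"
    have "z - c *s y \<in> H" unfolding H_def orthogonal_complement_def c_def using z y W
      by (simp add: subspace_diff subspace_scale skew_diff_right[OF s2] skew_scale_right[OF s2])
    then obtain u v where uv: "u \<in> U" "v \<in> V" "z - c *s y = u + v" using UV(2) by blast
    have "u - \<omega>2 y v *s x0 \<in> U" using uv(1) x0(1) sU(1) by (simp add: subspace_diff subspace_scale)
    moreover have "v + \<omega>2 y v *s x0 + c *s y \<in> U'" using uv(2) unfolding U'_def by blast
    moreover have "z = (u - \<omega>2 y v *s x0) + (v + \<omega>2 y v *s x0 + c *s y)"
      using uv(3) by (simp add: algebra_simps)
    ultimately show "\<exists>u\<in>U. \<exists>u'\<in>U'. z = u + u'" by blast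
  qed
  moreover have "U \<subseteq> W" using sU(2) HW by blast
  ultimately have "direct_sum W U U'"
    using sU(1) adjoin_subspace[folded U'_def] unfolding direct_sum_def by blast
  then show ?thesis unfolding U'_def .
qed

lemma adjoin_isotropic:
  "isotropic \<omega>1 {v + \<omega>2 y v *s x0 + c *s y |v c. v \<in> V}"
  "isotropic \<omega>2 {v + \<omega>2 y v *s x0 + c *s y |v c. v \<in> V}"
proof -
  have sV: "V \<subseteq> orthogonal_complement W \<omega>2 {x0}" "isotropic \<omega>1 V" "isotropic \<omega>2 V"
    using split unfolding isotropic_splitting_def direct_sum_def by blast+
  have vW: "v \<in> W" "\<omega>2 x0 v = 0" "\<omega>2 v x0 = 0" if "v \<in> V" for v
    using that sV(1) skew_swap[OF s2, of v x0] unfolding orthogonal_complement_def by auto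
  have x0r: "\<omega>1 x0 z = 0" "\<omega>1 z x0 = 0" if "z \<in> W" for z
    using x0(2) that skew_swap[OF s1, of z x0] unfolding radical_def by auto
  have pair: "\<exists>v1 c1 v2 c2. p = v1 + \<omega>2 y v1 *s x0 + c1 *s y \<and> v1 \<in> V \<and> q = v2 + \<omega>2 y v2 *s x0 + c2 *s y \<and> v2 \<in> V"
    if "p \<in> {v + \<omega>2 y v *s x0 + c *s y |v c. v \<in> V}" "q \<in> {v + \<omega>2 y v *s x0 + c *s y |v c. v \<in> V}" for p q
    using that by blast
  show "isotropic \<omega>1 {v + \<omega>2 y v *s x0 + c *s y |v c. v \<in> V}"
    unfolding isotropic_def
  proof (intro ballI)
    fix p q assume "p \<in> {v + \<omega>2 y v *s x0 + c *s y |v c. v \<in> V}" "q \<in> {v + \<omega>2 y v *s x0 + c *s y |v c. v \<in> V}"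
    then obtain v1 c1 v2 c2 where pq: "p = v1 + \<omega>2 y v1 *s x0 + c1 *s y" "v1 \<in> V"
      "q = v2 + \<omega>2 y v2 *s x0 + c2 *s y" "v2 \<in> V" using pair by blast
    have "\<omega>1 v1 v2 = 0" "\<omega>1 v1 y = 0" "\<omega>1 y v2 = 0"
      using sV(2) y(3) pq skew_swap[OF s1, of y v2] unfolding isotropic_def by auto
    moreover have "\<omega>1 x0 v2 = 0" "\<omega>1 v1 x0 = 0" "\<omega>1 x0 y = 0" "\<omega>1 y x0 = 0"
      using x0r vW pq y(1) by blast+
    ultimately show "\<omega>1 p q = 0"
      unfolding pq(1,3)
      by (simp add: skew_add_left[OF s1] skew_add_right[OF s1] skew_scale_left[OF s1] skew_scale_right[OF s1]
          skew_self[OF s1])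
  qed
  show "isotropic \<omega>2 {v + \<omega>2 y v *s x0 + c *s y |v c. v \<in> V}"
    unfolding isotropic_def
  proof (intro ballI)
    fix p q assume "p \<in> {v + \<omega>2 y v *s x0 + c *s y |v c. v \<in> V}" "q \<in> {v + \<omega>2 y v *s x0 + c *s y |v c. v \<in> V}"
    then obtain v1 c1 v2 c2 where pq: "p = v1 + \<omega>2 y v1 *s x0 + c1 *s y" "v1 \<in> V"
      "q = v2 + \<omega>2 y v2 *s x0 + c2 *s y" "v2 \<in> V" using pair by blast
    have "\<omega>2 v1 v2 = 0" using sV(3) pq unfolding isotropic_def by blast
    moreover have "\<omega>2 v1 y = - \<omega>2 y v1" by (rule skew_swap[OF s2])
    moreover have "\<omega>2 y x0 = - 1" using skew_swap[OF s2, of y x0] y(2) by simp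
    ultimately show "\<omega>2 p q = 0"
      unfolding pq(1,3) using y(2) vW pq(2,4)
      by (simp add: skew_add_left[OF s2] skew_add_right[OF s2] skew_scale_left[OF s2]
          skew_scale_right[OF s2] skew_self[OF s2] algebra_simps)
  qed
qed

lemma isotropic_splitting_adjoin:
  "isotropic_splitting W U {v + \<omega>2 y v *s x0 + c *s y |v c. v \<in> V} \<omega>1 \<omega>2"
  using adjoin_direct_sum adjoin_isotropic split unfolding isotropic_splitting_def by blast

end

lemma splitting_extend_kernel:
  assumes s1: "skew_form \<omega>1" and s2: "skew_form \<omega>2" and W: "subspace W"
    and g: "minimal_radical W \<omega>1 \<omega>2"
    and x0: "x0 \<in> radical W \<omega>1" and y0: "y0 \<in> W" "\<omega>2 x0 y0 \<noteq> 0"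
    and split: "isotropic_splitting (orthogonal_complement W \<omega>2 {x0}) U V \<omega>1 \<omega>2"
    and rad: "radical (orthogonal_complement W \<omega>2 {x0}) \<omega>1 \<subseteq> U"
  shows "\<exists>U U'. isotropic_splitting W U U' \<omega>1 \<omega>2 \<and> radical W \<omega>1 \<subseteq> U"
proof -
  define H where "H = orthogonal_complement W \<omega>2 {x0}"
  have HW: "H \<subseteq> W" unfolding H_def by (rule orthogonal_complement_subset)
  have sV: "subspace V" "V \<subseteq> H" and UV: "U \<inter> V = {0}"
    using split unfolding isotropic_splitting_def direct_sum_def H_def by blast+
  have x0W: "x0 \<in> W" using x0 unfolding radical_def by blast
  have "x0 \<in> radical H \<omega>1"
    using x0 x0W HW unfolding radical_def H_def orthogonal_complement_def by (auto simp: skew_self[OF s2])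
  then have x0U: "x0 \<in> U" using rad unfolding H_def by blast
  have "\<exists>y\<in>W. (\<forall>v\<in>V. \<omega>1 v y = 0) \<and> \<omega>2 x0 y \<noteq> 0"
  proof (rule ccontr)
    assume "\<not> ?thesis"
    then have "\<forall>w\<in>W. (\<forall>v\<in>V. \<omega>1 v w = 0) \<longrightarrow> \<omega>2 x0 w = 0" by blast
    then obtain u where u: "u \<in> V" "\<forall>w\<in>W. \<omega>2 x0 w = \<omega>1 u w"
      using linear_form_represented[OF s1 W sV(1) linear_form_skew_right[OF s2]] by blast
    have "u \<in> radical H \<omega>1"
      using u sV(2) HW unfolding radical_def H_def orthogonal_complement_def by auto
    then have "u = 0" using rad UV u(1) unfolding H_def by blast
    then show False using u(2) y0 by (simp add: skew_zero_left[OF s1])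
  qed
  then obtain y where y: "y \<in> W" "\<forall>v\<in>V. \<omega>1 v y = 0" "\<omega>2 x0 y \<noteq> 0" by blast
  define y' where "y' = (1 / \<omega>2 x0 y) *s y"
  have "y' \<in> W" "\<omega>2 x0 y' = 1" "\<forall>v\<in>V. \<omega>1 v y' = 0"
    unfolding y'_def using y W subspace_scale by (auto simp: skew_scale_right[OF s1] skew_scale_right[OF s2])
  note splitting = isotropic_splitting_adjoin[OF s1 s2 W split x0U x0 this]
  have "radical W \<omega>1 \<subseteq> U"
  proof
    fix z assume z: "z \<in> radical W \<omega>1"
    then have "\<omega>2 x0 z = 0" using minimal_radical_radical_isotropic[OF s1 s2 W g] x0
      unfolding isotropic_def by blast
    then have "z \<in> radical H \<omega>1"
      using z HW unfolding radical_def H_def orthogonal_complement_def by auto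
    then show "z \<in> U" using rad unfolding H_def by blast
  qed
  then show ?thesis using splitting by blast
qed

lemma pencil_radical_cases:
  assumes s1: "skew_form \<omega>1" and W: "subspace W"
  obtains (common) x0 where "x0 \<noteq> 0" "x0 \<in> radical W \<omega>1" "x0 \<in> radical W \<omega>2"
    | (regular) "radical W \<omega>1 = {0}"
    | (kernel) x0 y0 where "x0 \<in> radical W \<omega>1" "y0 \<in> W" "\<omega>2 x0 y0 \<noteq> 0"
proof (cases "radical W \<omega>1 = {0}")
  case False
  then obtain x0 where x0: "x0 \<in> radical W \<omega>1" "x0 \<noteq> 0"
    using subspace_0[OF subspace_radical[OF s1 W]] by blast
  show ?thesis
  proof (cases "x0 \<in> radical W \<omega>2")
    case False
    then obtain y0 where "y0 \<in> W" "\<omega>2 x0 y0 \<noteq> 0" using x0(1) unfolding radical_def by blast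
    then show ?thesis using that(3) x0(1) by blast
  qed (use that(1) x0 in blast)
qed

lemma exists_line_complement:
  assumes W: "subspace W" and x: "x \<in> W" "x \<noteq> 0"
  obtains H where "direct_sum W (span {x}) H" "dim H < dim W"
proof -
  have "span {x} \<subseteq> W" using x W by (simp add: span_minimal)
  then obtain H where H: "direct_sum W (span {x}) H"
    using direct_sum_complement_exists[OF subspace_span W] by blast
  then have "subspace H" "H \<subseteq> W" "x \<notin> H"
    using x(2) span_base[of x "{x}"] unfolding direct_sum_def by blast+
  then show ?thesis using that H dim_less_subspace[OF _ W _ x(1)] by blast
qed

lemma dim_orthogonal_complement_less:
  assumes s: "skew_form \<omega>" and W: "subspace W" and y: "y \<in> W" "\<omega> x y \<noteq> 0"
  shows "dim (orthogonal_complement W \<omega> {x}) < dim W"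
  using y by (intro dim_less_subspace[OF subspace_orthogonal_complement[OF s W] W orthogonal_complement_subset])
    (auto simp: orthogonal_complement_def)

lemma minimal_radical_isotropic_splitting:
  assumes s1: "skew_form \<omega>1" and s2: "skew_form \<omega>2"
  shows "subspace W \<Longrightarrow> minimal_radical W \<omega>1 \<omega>2
    \<Longrightarrow> \<exists>U U'. isotropic_splitting W U U' \<omega>1 \<omega>2 \<and> radical W \<omega>1 \<subseteq> U"
proof (induction "dim W" arbitrary: W rule: less_induct)
  case less
  note W = less.prems(1) and g = less.prems(2)
  from s1 W show ?case
  proof (cases rule: pencil_radical_cases[of \<omega>1 W \<omega>2])
    case (common x0)
    then have "x0 \<in> W" unfolding radical_def by blast
    then obtain H where H: "direct_sum W (span {x0}) H" "dim H < dim W"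
      using exists_line_complement[OF W _ common(1)] by blast
    moreover have "subspace H" using H(1) unfolding direct_sum_def by blast
    moreover have "minimal_radical H \<omega>1 \<omega>2"
      by (rule minimal_radical_common_radical[OF s1 s2 W g common(2,3,1) H(1)])
    ultimately obtain U V where "isotropic_splitting H U V \<omega>1 \<omega>2" "radical H \<omega>1 \<subseteq> U"
      using less.hyps by blast
    then show ?thesis using splitting_extend_common_radical[OF s1 s2 W common(2,3) H(1)] by blast
  next
    case regular
    then obtain U U' where "isotropic_splitting W U U' \<omega>1 \<omega>2"
      using regular_isotropic_splitting[OF s1 s2 W] by blast
    moreover have "0 \<in> U" using calculation subspace_0 unfolding isotropic_splitting_def direct_sum_def by blast
    then have "radical W \<omega>1 \<subseteq> U" using regular by simp
    ultimately show ?thesis by blast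
  next
    case (kernel x0 y0)
    have "dim (orthogonal_complement W \<omega>2 {x0}) < dim W"
      by (rule dim_orthogonal_complement_less[OF s2 W kernel(2,3)])
    moreover have "subspace (orthogonal_complement W \<omega>2 {x0})"
      by (rule subspace_orthogonal_complement[OF s2 W])
    moreover have "minimal_radical (orthogonal_complement W \<omega>2 {x0}) \<omega>1 \<omega>2"
      by (rule minimal_radical_kernel[OF s1 s2 W g kernel])
    ultimately obtain U V where "isotropic_splitting (orthogonal_complement W \<omega>2 {x0}) U V \<omega>1 \<omega>2"
      "radical (orthogonal_complement W \<omega>2 {x0}) \<omega>1 \<subseteq> U"
      using less.hyps by blast
    then show ?thesis using splitting_extend_kernel[OF s1 s2 W g kernel] by blast
  qed
qed

theorem skew_forms_isotropic_splitting:
  assumes s1: "skew_form \<omega>1" and s2: "skew_form \<omega>2" and W: "subspace W"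
  obtains U U' where "isotropic_splitting W U U' \<omega>1 \<omega>2"
proof -
  define r where "r p = dim (radical W (pencil (fst p) (snd p) \<omega>1 \<omega>2))" for p
  obtain a0 b0 where least: "\<And>a b. r (a0, b0) \<le> r (a, b)"
    using ex_has_least_nat[of "\<lambda>_. True" "(0, 0)" r] by force
  consider (first) "a0 \<noteq> 0" | (second) "a0 = 0" "b0 \<noteq> 0" | (zero) "a0 = 0" "b0 = 0" by blast
  then show ?thesis
  proof cases
    case first
    define \<sigma> where "\<sigma> = pencil a0 b0 \<omega>1 \<omega>2"
    have "pencil a b \<sigma> \<omega>2 = pencil (a * a0) (a * b0 + b) \<omega>1 \<omega>2" for a b
      unfolding \<sigma>_def pencil_def by (simp add: fun_eq_iff algebra_simps)
    then have "minimal_radical W \<sigma> \<omega>2"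
      using least unfolding minimal_radical_def r_def \<sigma>_def by (metis fst_conv snd_conv)
    then obtain U U' where "isotropic_splitting W U U' \<sigma> \<omega>2"
      using minimal_radical_isotropic_splitting[OF skew_form_pencil[OF s1 s2, of a0 b0] s2 W, folded \<sigma>_def] by blast
    moreover have "isotropic \<omega>1 X" if "isotropic \<sigma> X" "isotropic \<omega>2 X" for X
      using that first unfolding isotropic_def \<sigma>_def pencil_def by auto
    ultimately show ?thesis using that isotropic_splitting_transfer by blast
  next
    case second
    define \<sigma> where "\<sigma> = pencil 0 b0 \<omega>1 \<omega>2"
    have "pencil a b \<sigma> \<omega>1 = pencil b (a * b0) \<omega>1 \<omega>2" for a b
      unfolding \<sigma>_def pencil_def by (simp add: fun_eq_iff algebra_simps)
    then have "minimal_radical W \<sigma> \<omega>1"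
      using least second(1) unfolding minimal_radical_def r_def \<sigma>_def by (metis fst_conv snd_conv)
    then obtain U U' where "isotropic_splitting W U U' \<sigma> \<omega>1"
      using minimal_radical_isotropic_splitting[OF skew_form_pencil[OF s1 s2, of 0 b0] s1 W, folded \<sigma>_def] by blast
    moreover have "isotropic \<omega>2 X" if "isotropic \<sigma> X" for X
      using that second(2) unfolding isotropic_def \<sigma>_def pencil_def by auto
    ultimately show ?thesis using that isotropic_splitting_transfer by blast
  next
    case zero
    have "dim W \<le> dim (radical W \<omega>)" if "\<omega> = pencil 1 0 \<omega>1 \<omega>2 \<or> \<omega> = pencil 0 1 \<omega>1 \<omega>2" for \<omega>
      using least[of 1 0] least[of 0 1] zero that unfolding r_def by (auto simp: radical_pencil_zero)
    moreover have "pencil 1 0 \<omega>1 \<omega>2 = \<omega>1" "pencil 0 1 \<omega>1 \<omega>2 = \<omega>2" unfolding pencil_def by simp_all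
    ultimately have "dim W \<le> dim (radical W \<omega>1)" "dim W \<le> dim (radical W \<omega>2)" by auto
    moreover have "radical W \<omega> = W" if "skew_form \<omega>" "dim W \<le> dim (radical W \<omega>)" for \<omega>
      using subspace_dim_equal[OF subspace_radical[OF that(1) W] W radical_subset that(2)] .
    ultimately have "radical W \<omega>1 = W" "radical W \<omega>2 = W" using s1 s2 by blast+
    then have "isotropic \<omega>1 W" "isotropic \<omega>2 W" unfolding isotropic_def radical_def by blast+
    then show ?thesis using isotropic_splitting_trivial[OF s1 s2 W] that by blast
  qed
qed

section \<open>Periodic derivations\<close>

lemma direct_sum_triple_decomposition:
  assumes "direct_sum UNIV N V" "direct_sum V U U'"
  shows "\<exists>u\<in>U. \<exists>u'\<in>U'. \<exists>z\<in>N. x = u + u' + z"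
proof -
  obtain z w where "z \<in> N" "w \<in> V" "x = z + w" using assms(1) unfolding direct_sum_def by blast
  moreover obtain u u' where "u \<in> U" "u' \<in> U'" "w = u + u'"
    using assms(2) \<open>w \<in> V\<close> unfolding direct_sum_def by blast
  ultimately have "x = u + u' + z" by (simp add: algebra_simps)
  then show ?thesis using \<open>u \<in> U\<close> \<open>u' \<in> U'\<close> \<open>z \<in> N\<close> by blast
qed

lemma direct_sum_triple_independent:
  assumes N: "direct_sum UNIV N V" and UU: "direct_sum V U U'"
    and x: "u \<in> U" "u' \<in> U'" "z \<in> N" "u + u' + z = 0"
  shows "u = 0 \<and> u' = 0 \<and> z = 0"
proof -
  have sub: "subspace U" "subspace U'" "U \<subseteq> V" "U' \<subseteq> V" "U \<inter> U' = {0}"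
    using UU unfolding direct_sum_def by auto
  have subN: "subspace N" "N \<inter> V = {0}" "subspace V" using N unfolding direct_sum_def by auto
  have "u + u' \<in> V" using x(1,2) sub(3,4) subN(3) subspace_add by blast
  moreover have "u + u' = - z" using x(4) by (simp add: eq_neg_iff_add_eq_0)
  moreover have "- z \<in> N" using x(3) subN(1) subspace_neg by blast
  ultimately have "u + u' \<in> N \<inter> V" by simp
  then have uu: "u + u' = 0" using subN(2) by simp
  then have "u = - u'" by (simp add: eq_neg_iff_add_eq_0)
  then have "u \<in> U'" using x(2) sub(2) subspace_neg by simp
  then have "u = 0" using x(1) sub(5) by blast
  then show ?thesis using x(4) uu by simp
qed

lemma exists_linear_scaling:
  assumes X: "subspace X1" "subspace X2" "subspace X3"
    and dec: "\<And>x. \<exists>x1\<in>X1. \<exists>x2\<in>X2. \<exists>x3\<in>X3. x = x1 + x2 + x3"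
    and indep: "\<And>x1 x2 x3. x1 \<in> X1 \<Longrightarrow> x2 \<in> X2 \<Longrightarrow> x3 \<in> X3 \<Longrightarrow> x1 + x2 + x3 = 0
      \<Longrightarrow> x1 = 0 \<and> x2 = 0 \<and> x3 = 0"
  obtains D where "Vector_Spaces.linear scale scale D"
    "\<And>x1 x2 x3. x1 \<in> X1 \<Longrightarrow> x2 \<in> X2 \<Longrightarrow> x3 \<in> X3 \<Longrightarrow> D (x1 + x2 + x3) = a *s x1 + b *s x2 + c *s x3"
proof -
  define P where "P x t \<longleftrightarrow> fst t \<in> X1 \<and> fst (snd t) \<in> X2 \<and> snd (snd t) \<in> X3
    \<and> x = fst t + fst (snd t) + snd (snd t)" for x t
  define D where "D x = (let t = SOME t. P x t in a *s fst t + b *s fst (snd t) + c *s snd (snd t))" for x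
  have Dchar: "D (x1 + x2 + x3) = a *s x1 + b *s x2 + c *s x3"
    if x: "x1 \<in> X1" "x2 \<in> X2" "x3 \<in> X3" for x1 x2 x3
  proof -
    define t where "t = (SOME t. P (x1 + x2 + x3) t)"
    have "P (x1 + x2 + x3) (x1, x2, x3)" unfolding P_def using x by simp
    then have t: "P (x1 + x2 + x3) t" unfolding t_def by (rule someI)
    have "(x1 - fst t) + (x2 - fst (snd t)) + (x3 - snd (snd t)) = 0"
      using t unfolding P_def by (simp add: algebra_simps)
    moreover have "x1 - fst t \<in> X1" "x2 - fst (snd t) \<in> X2" "x3 - snd (snd t) \<in> X3"
      using t x X subspace_diff unfolding P_def by blast+
    ultimately have "x1 - fst t = 0 \<and> x2 - fst (snd t) = 0 \<and> x3 - snd (snd t) = 0" using indep by blast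
    then have "t = (x1, x2, x3)" by (simp add: prod_eq_iff)
    then show ?thesis unfolding D_def t_def[symmetric] by simp
  qed
  have "Vector_Spaces.linear scale scale D"
    unfolding Vector_Spaces.linear_iff
  proof (intro conjI allI)
    show "vector_space scale" by unfold_locales
    show "vector_space scale" by unfold_locales
    fix x y :: 'a and r
    obtain x1 x2 x3 y1 y2 y3 where xy: "x1 \<in> X1" "x2 \<in> X2" "x3 \<in> X3" "x = x1 + x2 + x3"
      "y1 \<in> X1" "y2 \<in> X2" "y3 \<in> X3" "y = y1 + y2 + y3" using dec by meson
    have sum: "x1 + y1 \<in> X1" "x2 + y2 \<in> X2" "x3 + y3 \<in> X3" using xy X subspace_add by blast+
    have "x + y = (x1 + y1) + (x2 + y2) + (x3 + y3)" using xy by (simp add: algebra_simps)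
    then have "D (x + y) = a *s (x1 + y1) + b *s (x2 + y2) + c *s (x3 + y3)" using Dchar[OF sum] by simp
    then show "D (x + y) = D x + D y"
      unfolding xy(4,8) Dchar[OF xy(1-3)] Dchar[OF xy(5-7)] by (simp add: algebra_simps)
    have scaled: "r *s x1 \<in> X1" "r *s x2 \<in> X2" "r *s x3 \<in> X3" using xy X subspace_scale by blast+
    have "r *s x = (r *s x1) + (r *s x2) + (r *s x3)" using xy by (simp add: algebra_simps)
    then have "D (r *s x) = a *s (r *s x1) + b *s (r *s x2) + c *s (r *s x3)" using Dchar[OF scaled] by simp
    then show "D (r *s x) = r *s D x"
      unfolding xy(4) Dchar[OF xy(1-3)] by (simp add: algebra_simps)
  qed
  then show ?thesis using that Dchar by blast
qed

end

lemma finite_dim_space_basis: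
  assumes "vector_space sc" "finite_dim_space sc"
  obtains B where "finite_dimensional_vector_space sc B"
proof -
  interpret vector_space sc by fact
  obtain B where B: "finite B" "span B = UNIV" using assms(2) unfolding finite_dim_space_def by blast
  obtain B0 where B0: "B0 \<subseteq> B" "independent B0" "B \<subseteq> span B0" by (rule maximal_independent_subset)
  have "span B0 = UNIV" using B(2) B0(3) span_minimal[OF B0(3) subspace_span] by blast
  then have "finite_dimensional_vector_space sc B0"
    using B(1) B0(1,2) finite_subset by unfold_locales blast+
  then show ?thesis by (rule that)
qed

lemma sixth_roots_of_unity_sum:
  obtains \<zeta> :: complex where "\<zeta> + cnj \<zeta> = 1" "\<zeta> ^ 6 = 1" "cnj \<zeta> ^ 6 = 1"
proof
  define \<zeta> where "\<zeta> = Complex (1/2) (sqrt 3 / 2)"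
  show "\<zeta> + cnj \<zeta> = 1" unfolding \<zeta>_def by (simp add: complex_eq_iff)
  have "\<zeta> ^ 3 = - 1" unfolding \<zeta>_def by (simp add: power3_eq_cube complex_eq_iff algebra_simps)
  then show "\<zeta> ^ 6 = 1" "cnj \<zeta> ^ 6 = 1" using power_mult[of \<zeta> 3 2] complex_cnj_power[of \<zeta> 6] by simp_all
qed

locale two_step_lie = complex_fd_space scale Basis
  for scale :: "complex \<Rightarrow> 'a::ab_group_add \<Rightarrow> 'a" (infixr \<open>*s\<close> 75) and Basis +
  fixes br :: "'a \<Rightarrow> 'a \<Rightarrow> 'a"
  assumes lie: "lie_algebra scale br" and nilpotent: "two_step_nilpotent br"
    and derived_dim: "dim (derived_algebra scale br) \<le> 2"
begin

lemma bracket_add_right: "br x (y + z) = br x y + br x z"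
  and bracket_scale_right: "br x (c *s y) = c *s br x y"
  and bracket_add_left: "br (x + y) z = br x z + br y z"
  and bracket_scale_left: "br (c *s x) y = c *s br x y"
  using lie unfolding lie_algebra_def Vector_Spaces.linear_iff by blast+

lemma bracket_swap: "br y x = - br x y"
proof -
  have "br (x + y) (x + y) = br x x + br y x + (br x y + br y y)"
    by (simp only: bracket_add_left bracket_add_right)
  then have "br y x + br x y = 0" using lie unfolding lie_algebra_def by simp
  then show ?thesis by (simp add: eq_neg_iff_add_eq_0)
qed

lemma bracket_in_derived: "br x y \<in> derived_algebra scale br"
  unfolding derived_algebra_def by (intro span_base) blast

lemma bracket_derived_right: "z \<in> derived_algebra scale br \<Longrightarrow> br x z = 0"
  unfolding derived_algebra_def
proof (induction rule: span_induct)
  case base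
  show ?case unfolding subspace_def using bracket_scale_right[of x 0 0] by (simp add: bracket_add_right bracket_scale_right)
next
  case (step z)
  then show ?case using nilpotent unfolding two_step_nilpotent_def by blast
qed

lemma bracket_derived_left: "z \<in> derived_algebra scale br \<Longrightarrow> br z x = 0"
  using bracket_derived_right[of z x] bracket_swap[of z x] by simp

text \<open>The two forms are the coordinates of the bracket in a basis of the derived algebra.\<close>
lemma bracket_components:
  obtains \<omega>1 \<omega>2 where "skew_form \<omega>1" "skew_form \<omega>2"
    "\<And>x y. \<omega>1 x y = 0 \<Longrightarrow> \<omega>2 x y = 0 \<Longrightarrow> br x y = 0"
proof -
  obtain Bn where Bn: "Bn \<subseteq> derived_algebra scale br" "independent Bn"
    "derived_algebra scale br \<subseteq> span Bn" "card Bn = dim (derived_algebra scale br)"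
    using basis_exists by blast
  have finB: "finite Bn" using Bn(2) finiteI_independent by blast
  have inB: "br x y \<in> span Bn" for x y using bracket_in_derived Bn(3) by blast
  have "card Bn \<le> 2" using Bn(4) derived_dim by simp
  then have "card Bn = 0 \<or> card Bn = 1 \<or> card Bn = 2" by linarith
  then obtain z1 z2 where zz: "Bn \<subseteq> {z1, z2}"
    using finB by (elim disjE) (auto simp: card_1_singleton_iff card_2_iff)
  define \<omega> where "\<omega> z x y = representation Bn (br x y) z" for z x y
  have sk: "skew_form (\<omega> z)" for z
    unfolding skew_form_def \<omega>_def
  proof (intro conjI allI)
    fix x y w c
    show "representation Bn (br (x + y) w) z = representation Bn (br x w) z + representation Bn (br y w) z"
      using representation_add[OF Bn(2) inB inB] by (simp add: bracket_add_left)
    show "representation Bn (br (c *s x) y) z = c * representation Bn (br x y) z"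
      using representation_scale[OF Bn(2) inB] by (simp add: bracket_scale_left)
    show "representation Bn (br y x) z = - representation Bn (br x y) z"
      using representation_neg[OF Bn(2) inB] by (simp add: bracket_swap[of y x])
  qed
  have "br x y = 0" if "\<omega> z1 x y = 0" "\<omega> z2 x y = 0" for x y
  proof -
    have "br x y = (\<Sum>b\<in>Bn. representation Bn (br x y) b *s b)"
      using sum_representation_eq[OF Bn(2) inB finB order_refl] by simp
    also have "\<dots> = 0"
      using zz that unfolding \<omega>_def by (intro sum.neutral) auto
    finally show ?thesis .
  qed
  then show ?thesis using that[OF sk sk] by blast
qed

lemma scaling_derivation:
  assumes U: "subspace U" "subspace U'" "\<And>u v. u \<in> U \<Longrightarrow> v \<in> U \<Longrightarrow> br u v = 0"
      "\<And>u v. u \<in> U' \<Longrightarrow> v \<in> U' \<Longrightarrow> br u v = 0"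
    and dec: "\<And>x. \<exists>u\<in>U. \<exists>u'\<in>U'. \<exists>z\<in>derived_algebra scale br. x = u + u' + z"
    and D: "\<And>u u' z. u \<in> U \<Longrightarrow> u' \<in> U' \<Longrightarrow> z \<in> derived_algebra scale br
      \<Longrightarrow> D (u + u' + z) = a *s u + b *s u' + z"
    and ab: "a + b = 1"
  shows "D (br x y) = br (D x) y + br x (D y)"
proof -
  obtain u1 v1 z1 where x: "u1 \<in> U" "v1 \<in> U'" "z1 \<in> derived_algebra scale br" "x = u1 + v1 + z1"
    using dec by blast
  obtain u2 v2 z2 where y: "u2 \<in> U" "v2 \<in> U'" "z2 \<in> derived_algebra scale br" "y = u2 + v2 + z2"
    using dec by blast
  have zero: "br u1 u2 = 0" "br v1 v2 = 0" "br p z2 = 0" "br z1 p = 0" for p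
    using U(3)[OF x(1) y(1)] U(4)[OF x(2) y(2)] bracket_derived_right[OF y(3)] bracket_derived_left[OF x(3)]
    by blast+
  have "D (br x y) = br x y"
    using D[OF subspace_0[OF U(1)] subspace_0[OF U(2)] bracket_in_derived] by simp
  also have "br x y = br u1 v2 + br v1 u2"
    unfolding x(4) y(4) by (simp add: bracket_add_left bracket_add_right zero)
  also have "\<dots> = (a + b) *s br u1 v2 + (b + a) *s br v1 u2" using ab by (simp add: add.commute)
  also have "\<dots> = br (a *s u1 + b *s v1 + z1) (u2 + v2 + z2) + br (u1 + v1 + z1) (a *s u2 + b *s v2 + z2)"
    by (simp add: bracket_add_left bracket_add_right bracket_scale_left bracket_scale_right zero algebra_simps)
  also have "\<dots> = br (D x) y + br x (D y)" using D[OF x(1-3)] D[OF y(1-3)] x(4) y(4) by simp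
  finally show ?thesis .
qed

lemma exists_periodic_derivation: "\<exists>D. periodic_derivation scale br D"
proof -
  obtain \<omega>1 \<omega>2 where s1: "skew_form \<omega>1" and s2: "skew_form \<omega>2"
    and vanish: "\<And>x y. \<omega>1 x y = 0 \<Longrightarrow> \<omega>2 x y = 0 \<Longrightarrow> br x y = 0"
    using bracket_components by blast
  define N where "N = derived_algebra scale br"
  have sN: "subspace N" unfolding N_def derived_algebra_def by (rule subspace_span)
  obtain V where V: "direct_sum UNIV N V"
    using direct_sum_complement_exists[OF sN subspace_UNIV subset_UNIV] by blast
  then have "subspace V" unfolding direct_sum_def by blast
  then obtain U U' where UU: "isotropic_splitting V U U' \<omega>1 \<omega>2"
    using skew_forms_isotropic_splitting[OF s1 s2] by blast
  have iso: "isotropic \<omega>1 U" "isotropic \<omega>2 U" "isotropic \<omega>1 U'" "isotropic \<omega>2 U'"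
    using UU unfolding isotropic_splitting_def by blast+
  have "direct_sum V U U'" using UU unfolding isotropic_splitting_def by blast
  then have sU: "subspace U" "subspace U'" "direct_sum V U U'" unfolding direct_sum_def by blast+
  have abelian: "br u v = 0" if "isotropic \<omega>1 X" "isotropic \<omega>2 X" "u \<in> X" "v \<in> X" for X u v
    using that unfolding isotropic_def by (blast intro: vanish)
  note dec = direct_sum_triple_decomposition[OF V sU(3)]
  obtain \<zeta> where \<zeta>_sum: "\<zeta> + cnj \<zeta> = 1" and \<zeta>: "\<zeta> ^ 6 = 1" "cnj \<zeta> ^ 6 = 1"
    by (rule sixth_roots_of_unity_sum)
  obtain D where D: "Vector_Spaces.linear scale scale D"
    "\<And>u u' z. u \<in> U \<Longrightarrow> u' \<in> U' \<Longrightarrow> z \<in> N \<Longrightarrow> D (u + u' + z) = \<zeta> *s u + cnj \<zeta> *s u' + 1 *s z"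
    using exists_linear_scaling[OF sU(1,2) sN dec direct_sum_triple_independent[OF V sU(3)]] by blast
  have Dpow: "(D ^^ k) (u + u' + z) = (\<zeta> ^ k) *s u + (cnj \<zeta> ^ k) *s u' + z"
    if "u \<in> U" "u' \<in> U'" "z \<in> N" for k u u' z
    using that by (induction k) (simp_all add: D(2) subspace_scale sU)
  have "D ^^ 6 = id"
  proof
    fix x
    obtain u u' z where "u \<in> U" "u' \<in> U'" "z \<in> N" "x = u + u' + z" using dec by blast
    then show "(D ^^ 6) x = id x" using Dpow \<zeta> by simp
  qed
  moreover have "D (br x y) = br (D x) y + br x (D y)" for x y
  proof (rule scaling_derivation[OF sU(1,2)])
    show "\<And>u v. u \<in> U \<Longrightarrow> v \<in> U \<Longrightarrow> br u v = 0" using abelian[OF iso(1,2)] .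
    show "\<And>u v. u \<in> U' \<Longrightarrow> v \<in> U' \<Longrightarrow> br u v = 0" using abelian[OF iso(3,4)] .
    show "\<And>x. \<exists>u\<in>U. \<exists>u'\<in>U'. \<exists>z\<in>derived_algebra scale br. x = u + u' + z" using dec unfolding N_def .
    show "\<And>u u' z. u \<in> U \<Longrightarrow> u' \<in> U' \<Longrightarrow> z \<in> derived_algebra scale br
      \<Longrightarrow> D (u + u' + z) = \<zeta> *s u + cnj \<zeta> *s u' + z" using D(2) unfolding N_def by simp
  qed (fact \<zeta>_sum)
  ultimately have "lie_derivation scale br D \<and> D ^^ 6 = id" using D(1) unfolding lie_derivation_def by blast
  then show ?thesis unfolding periodic_derivation_def by (intro exI[of _ D] conjI exI[of _ 6]) simp_all
qed

end

theorem proposition4p7: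
  fixes sc :: "complex \<Rightarrow> 'a::ab_group_add \<Rightarrow> 'a"
    and br :: "'a \<Rightarrow> 'a \<Rightarrow> 'a"
  assumes "lie_algebra sc br"
    and "finite_dim_space sc"
    and "two_step_nilpotent br"
    and "vector_space.dim sc (derived_algebra sc br) \<le> 2"
  shows "\<exists>D. periodic_derivation sc br D"
proof -
  have "vector_space sc" using assms(1) unfolding lie_algebra_def by blast
  then obtain B where "finite_dimensional_vector_space sc B"
    using finite_dim_space_basis assms(2) by blast
  then interpret two_step_lie sc B br
    using assms(1,3,4) by (intro two_step_lie.intro complex_fd_space.intro two_step_lie_axioms.intro)
  show ?thesis by (rule exists_periodic_derivation)
qed

end
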